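(* Let $\Omega\subset\mathbb{R}^d$, $d\ge2$, be an open bounded set with smooth boundary. Let $\psi\in H_0^1(\Omega)$, $u=\nabla^\perp\psi$, $\theta=\Lambda\psi$, and let $\phi\in C_0^\infty(\Omega)$. Then $$\int_\Omega\theta\,u\cdot\nabla\phi\,dx=\frac12\int_\Omega[\Lambda,\nabla^\perp]\psi\cdot\nabla\phi\,\psi\,dx-\frac12\int_\Omega\nabla^\perp\psi\cdot[\Lambda,\nabla\phi]\psi\,dx,$$ where $[\Lambda,\nabla^\perp]\psi=\Lambda\nabla^\perp\psi-\nabla^\perp\Lambda\psi$ and $[\Lambda,\nabla\phi]\psi=\Lambda(\psi\nabla\phi)-\nabla\phi\,\Lambda\psi$ (the integrals being understood as the appropriate duality pairings).
   Context: $\Lambda=(-\Delta)^{1/2}$ is the square root of the Dirichlet Laplacian on $\Omega$, defined through an $L^2$-orthonormal Dirichlet eigenfunction basis $\{w_j\}$, $-\Delta w_j=\lambda_jw_j$: $\Lambda f=\sum_j\lambda_j^{1/2}f_jw_j$, $f_j=\int_\Omega fw_j$; its domain $\mathcal D(\Lambda)$ coincides with $H_0^1(\Omega)$. $\nabla^\perp=(-\partial_{x_2},\partial_{x_1})$ (in $d\ge3$, $(-\partial_{x_2},\partial_{x_1},0,\dots,0)$), so that $\nabla^\perp\cdot\nabla\phi=0$. *)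

theory Defs
  imports "HOL-Analysis.Analysis"
begin

type_synonym 'n fn = "real^'n \<Rightarrow> real"

definition pd :: "'n::finite \<Rightarrow> 'n fn \<Rightarrow> 'n fn" where
  "pd i f x = frechet_derivative f (at x) (axis i 1)"

coinductive smooth :: "'n::finite fn \<Rightarrow> bool" where
  "(\<forall>x. f differentiable (at x)) \<Longrightarrow> (\<forall>i. smooth (pd i f)) \<Longrightarrow> smooth f"

definition test_fun :: "(real^'n::finite) set \<Rightarrow> 'n fn \<Rightarrow> bool" where
  "test_fun \<Omega> \<phi> \<longleftrightarrow> smooth \<phi> \<and> compact (closure {x. \<phi> x \<noteq> 0})
      \<and> closure {x. \<phi> x \<noteq> 0} \<subseteq> \<Omega>"

definition smooth_bounded_domain :: "(real^'n::finite) set \<Rightarrow> bool" where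
  "smooth_bounded_domain \<Omega> \<longleftrightarrow> open \<Omega> \<and> bounded \<Omega> \<and>
     (\<forall>p\<in>frontier \<Omega>. \<exists>U \<rho>. open U \<and> p \<in> U \<and> smooth \<rho> \<and>
        \<Omega> \<inter> U = {x\<in>U. \<rho> x < 0} \<and>
        (\<forall>x\<in>U. \<rho> x = 0 \<longrightarrow> (\<exists>i. pd i \<rho> x \<noteq> 0)))"

definition integ :: "(real^'n::finite) set \<Rightarrow> 'n fn \<Rightarrow> real" where
  "integ \<Omega> f = set_lebesgue_integral lebesgue \<Omega> f"

definition L2 :: "(real^'n::finite) set \<Rightarrow> 'n fn \<Rightarrow> bool" where
  "L2 \<Omega> f \<longleftrightarrow> set_borel_measurable lebesgue \<Omega> f \<and> set_integrable lebesgue \<Omega> (\<lambda>x. (f x)^2)"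

definition weak_pd :: "(real^'n::finite) set \<Rightarrow> 'n \<Rightarrow> 'n fn \<Rightarrow> 'n fn \<Rightarrow> bool" where
  "weak_pd \<Omega> i f g \<longleftrightarrow> L2 \<Omega> f \<and> L2 \<Omega> g \<and>
     (\<forall>\<phi>. test_fun \<Omega> \<phi> \<longrightarrow> integ \<Omega> (\<lambda>x. f x * pd i \<phi> x) = - integ \<Omega> (\<lambda>x. g x * \<phi> x))"

definition wpd :: "(real^'n::finite) set \<Rightarrow> 'n \<Rightarrow> 'n fn \<Rightarrow> 'n fn" where
  "wpd \<Omega> i f = (SOME g. weak_pd \<Omega> i f g)"

definition H1 :: "(real^'n::finite) set \<Rightarrow> 'n fn \<Rightarrow> bool" where
  "H1 \<Omega> f \<longleftrightarrow> L2 \<Omega> f \<and> (\<forall>i. \<exists>g. weak_pd \<Omega> i f g)"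

definition H01 :: "(real^'n::finite) set \<Rightarrow> 'n fn \<Rightarrow> bool" where
  "H01 \<Omega> f \<longleftrightarrow> H1 \<Omega> f \<and>
     (\<exists>\<phi>s. (\<forall>k. test_fun \<Omega> (\<phi>s k)) \<and>
        (\<lambda>k. integ \<Omega> (\<lambda>x. (f x - \<phi>s k x)^2)) \<longlonglongrightarrow> 0 \<and>
        (\<forall>i. (\<lambda>k. integ \<Omega> (\<lambda>x. (wpd \<Omega> i f x - pd i (\<phi>s k) x)^2)) \<longlonglongrightarrow> 0))"

definition coef :: "(real^'n::finite) set \<Rightarrow> (nat \<Rightarrow> 'n fn) \<Rightarrow> 'n fn \<Rightarrow> nat \<Rightarrow> real" where
  "coef \<Omega> w f j = integ \<Omega> (\<lambda>x. f x * w j x)"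

definition dirichlet_eigenbasis ::
    "(real^'n::finite) set \<Rightarrow> (nat \<Rightarrow> 'n fn) \<Rightarrow> (nat \<Rightarrow> real) \<Rightarrow> bool" where
  "dirichlet_eigenbasis \<Omega> w lam \<longleftrightarrow>
     (\<forall>j. H01 \<Omega> (w j) \<and>
        (\<forall>\<phi>. test_fun \<Omega> \<phi> \<longrightarrow>
           (\<Sum>i\<in>UNIV. integ \<Omega> (\<lambda>x. wpd \<Omega> i (w j) x * pd i \<phi> x))
             = lam j * integ \<Omega> (\<lambda>x. w j x * \<phi> x))) \<and>
     (\<forall>j k. integ \<Omega> (\<lambda>x. w j x * w k x) = (if j = k then 1 else 0)) \<and>
     (\<forall>f. L2 \<Omega> f \<longrightarrow>
        (\<lambda>n. integ \<Omega> (\<lambda>x. (f x - (\<Sum>j<n. coef \<Omega> w f j * w j x))^2)) \<longlonglongrightarrow> 0)"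

definition Lam :: "(real^'n::finite) set \<Rightarrow> (nat \<Rightarrow> 'n fn) \<Rightarrow> (nat \<Rightarrow> real) \<Rightarrow> 'n fn \<Rightarrow> 'n fn" where
  "Lam \<Omega> w lam f = (SOME g. L2 \<Omega> g \<and> (\<forall>j. coef \<Omega> w g j = sqrt (lam j) * coef \<Omega> w f j))"

(* duality pairing <Lambda f, g> = sum_j lam_j^(1/2) f_j g_j  (f in L^2, g in D(Lambda)) *)
definition Lam_pair :: "(real^'n::finite) set \<Rightarrow> (nat \<Rightarrow> 'n fn) \<Rightarrow> (nat \<Rightarrow> real) \<Rightarrow> 'n fn \<Rightarrow> 'n fn \<Rightarrow> real" where
  "Lam_pair \<Omega> w lam f g = (\<Sum>j. sqrt (lam j) * coef \<Omega> w f j * coef \<Omega> w g j)"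

definition gperp :: "(real^'n::finite) set \<Rightarrow> 'n \<Rightarrow> 'n \<Rightarrow> 'n fn \<Rightarrow> 'n \<Rightarrow> 'n fn" where
  "gperp \<Omega> i1 i2 f k x =
     (if k = i1 then - wpd \<Omega> i2 f x else if k = i2 then wpd \<Omega> i1 f x else 0)"

(* distributional pairing <(nabla^perp h)_k, g> = - int h * (k-th comp. of nabla^perp applied to g),
   for h in L^2, g in H_0^1 *)
definition perp_pair :: "(real^'n::finite) set \<Rightarrow> 'n \<Rightarrow> 'n \<Rightarrow> 'n fn \<Rightarrow> 'n \<Rightarrow> 'n fn \<Rightarrow> real" where
  "perp_pair \<Omega> i1 i2 h k g = - integ \<Omega> (\<lambda>x. h x * gperp \<Omega> i1 i2 g k x)"

end

theory Submission
  imports Defs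
begin

text \<open>Write \<open>f\<^sub>k = \<psi> \<partial>\<^sub>k\<phi>\<close>. The first sum on the right is
  \<open>\<Sum>\<^sub>k \<langle>\<Lambda>u\<^sub>k, f\<^sub>k\<rangle> - \<langle>(\<nabla>\<^sup>\<bottom>\<theta>)\<^sub>k, f\<^sub>k\<rangle>\<close>, the second is
  \<open>\<Sum>\<^sub>k \<integral> u\<^sub>k \<Lambda>f\<^sub>k - \<integral> \<theta> u\<cdot>\<nabla>\<phi>\<close>. Since \<open>\<Lambda>\<close> is symmetric, \<open>\<langle>\<Lambda>u\<^sub>k, f\<^sub>k\<rangle> = \<integral> u\<^sub>k \<Lambda>f\<^sub>k\<close>
  (Parseval in the eigenbasis), and integrating \<open>\<nabla>\<^sup>\<bottom>\<close> by parts gives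
  \<open>-\<Sum>\<^sub>k \<langle>(\<nabla>\<^sup>\<bottom>\<theta>)\<^sub>k, f\<^sub>k\<rangle> = \<integral> \<theta> \<nabla>\<^sup>\<bottom>\<cdot>(\<psi>\<nabla>\<phi>) = \<integral> \<theta> u\<cdot>\<nabla>\<phi>\<close>, the second derivatives of \<open>\<phi>\<close>
  cancelling. Hence both halves equal the left-hand side.

  The analytic work is to give \<open>\<Lambda>\<psi>\<close> and \<open>\<Lambda>f\<^sub>k\<close> their defining property. Both \<open>\<psi>\<close> and \<open>f\<^sub>k\<close>
  are \<open>H\<^sup>1\<close>-limits of test functions, so the weak eigenvalue equation extends to them and yields
  the Bessel bound \<open>\<Sum>\<^sub>j \<lambda>\<^sub>j f\<^sub>j\<^sup>2 \<le> \<parallel>\<nabla>f\<parallel>\<^sup>2\<close>; the Riesz--Fischer theorem (completeness of \<open>L\<^sup>2\<close>)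
  then provides an \<open>L\<^sup>2\<close> function with coefficients \<open>\<lambda>\<^sub>j\<^sup>1\<^sup>/\<^sup>2 f\<^sub>j\<close>.\<close>

section \<open>Square-integrable functions\<close>

definition square_integrable :: "'a measure \<Rightarrow> ('a \<Rightarrow> real) \<Rightarrow> bool" where
  "square_integrable M f \<longleftrightarrow> f \<in> borel_measurable M \<and> integrable M (\<lambda>x. (f x)\<^sup>2)"

definition mean_square_limit :: "'a measure \<Rightarrow> (nat \<Rightarrow> 'a \<Rightarrow> real) \<Rightarrow> ('a \<Rightarrow> real) \<Rightarrow> bool" where
  "mean_square_limit M f g \<longleftrightarrow> (\<lambda>n. LINT x|M. (g x - f n x)\<^sup>2) \<longlonglongrightarrow> 0"

lemma square_integrable_measurable [measurable_dest]:
  "square_integrable M f \<Longrightarrow> f \<in> borel_measurable M"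
  by (simp add: square_integrable_def)

lemma integrable_square: "square_integrable M f \<Longrightarrow> integrable M (\<lambda>x. (f x)\<^sup>2)"
  by (simp add: square_integrable_def)

lemma integrable_mult_square_integrable:
  assumes "square_integrable M f" "square_integrable M g"
  shows "integrable M (\<lambda>x. f x * g x)"
proof (rule Bochner_Integration.integrable_bound)
  show "integrable M (\<lambda>x. (f x)\<^sup>2 + (g x)\<^sup>2)"
    using assms by (simp add: square_integrable_def)
  have "\<bar>a * b\<bar> \<le> a\<^sup>2 + b\<^sup>2" for a b :: real
    using sum_squares_bound[of "\<bar>a\<bar>" "\<bar>b\<bar>"] mult_nonneg_nonneg[OF abs_ge_zero abs_ge_zero, of a b]
    unfolding abs_mult power2_abs by linarith
  then show "AE x in M. norm (f x * g x) \<le> norm ((f x)\<^sup>2 + (g x)\<^sup>2)"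
    by (intro AE_I2) simp
qed (use assms in measurable)

lemma square_integrable_add:
  assumes "square_integrable M f" "square_integrable M g"
  shows "square_integrable M (\<lambda>x. f x + g x)"
proof -
  have "(\<lambda>x. (f x + g x)\<^sup>2) = (\<lambda>x. (f x)\<^sup>2 + (g x)\<^sup>2 + 2 * (f x * g x))"
    by (simp add: fun_eq_iff power2_sum)
  then show ?thesis
    using assms integrable_mult_square_integrable[OF assms]
    by (simp add: square_integrable_def borel_measurable_add)
qed

lemma square_integrable_cmult:
  "square_integrable M f \<Longrightarrow> square_integrable M (\<lambda>x. c * f x)"
  by (simp add: square_integrable_def power_mult_distrib borel_measurable_times)

lemma square_integrable_uminus:
  "square_integrable M f \<Longrightarrow> square_integrable M (\<lambda>x. - f x)"
  by (simp add: square_integrable_def)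

lemma square_integrable_diff:
  "square_integrable M f \<Longrightarrow> square_integrable M g \<Longrightarrow> square_integrable M (\<lambda>x. f x - g x)"
  using square_integrable_add[OF _ square_integrable_uminus] by fastforce

lemma square_integrable_zero: "square_integrable M (\<lambda>x. 0)"
  by (simp add: square_integrable_def)

lemma square_integrable_sum:
  "(\<And>j. j \<in> A \<Longrightarrow> square_integrable M (f j)) \<Longrightarrow> square_integrable M (\<lambda>x. \<Sum>j\<in>A. f j x)"
  by (induction A rule: infinite_finite_induct)
    (auto simp: square_integrable_zero square_integrable_add)

lemma square_integrable_mult_bounded:
  assumes "square_integrable M f" "g \<in> borel_measurable M" "\<And>x. \<bar>g x\<bar> \<le> B"
  shows "square_integrable M (\<lambda>x. f x * g x)"
  unfolding square_integrable_def
proof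
  show "(\<lambda>x. f x * g x) \<in> borel_measurable M" using assms by measurable
  show "integrable M (\<lambda>x. (f x * g x)\<^sup>2)"
  proof (rule Bochner_Integration.integrable_bound)
    show "integrable M (\<lambda>x. B\<^sup>2 * (f x)\<^sup>2)" using assms by (simp add: square_integrable_def)
    have "(f x * g x)\<^sup>2 \<le> B\<^sup>2 * (f x)\<^sup>2" for x
    proof -
      have "(g x)\<^sup>2 \<le> B\<^sup>2"
        using assms(3)[of x] by (metis abs_le_square_iff abs_of_nonneg abs_ge_zero order.trans)
      then show ?thesis
        by (metis power_mult_distrib mult.commute mult_left_mono zero_le_power2)
    qed
    then show "AE x in M. norm ((f x * g x)\<^sup>2) \<le> norm (B\<^sup>2 * (f x)\<^sup>2)"
      by (intro AE_I2) simp
  qed (use assms in measurable)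
qed

lemma (in finite_measure) square_integrable_bounded:
  "g \<in> borel_measurable M \<Longrightarrow> (\<And>x. \<bar>g x\<bar> \<le> B) \<Longrightarrow> square_integrable M g"
  using square_integrable_mult_bounded[of M "\<lambda>_. 1" g B] by (simp add: square_integrable_def)

lemma quadratic_nonneg_imp_discriminant_le:
  fixes A B C :: real
  assumes "0 \<le> B" and "\<And>t. 0 \<le> A + 2 * t * C + t\<^sup>2 * B"
  shows "C\<^sup>2 \<le> A * B"
proof (cases "B = 0")
  case True
  have "C = 0"
  proof (rule ccontr)
    assume "C \<noteq> 0"
    have "0 \<le> A + 2 * (- (A + 1) / (2 * C)) * C" using assms(2)[of "- (A + 1) / (2 * C)"] True by simp
    also have "\<dots> = -1" using \<open>C \<noteq> 0\<close> by (simp add: field_simps)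
    finally show False by simp
  qed
  then show ?thesis using True by simp
next
  case False
  then have "B > 0" using assms(1) by simp
  have "0 \<le> A + 2 * (- C / B) * C + (- C / B)\<^sup>2 * B" by (rule assms(2))
  also have "\<dots> = A - C\<^sup>2 / B" using \<open>B > 0\<close> by (simp add: field_simps power2_eq_square)
  finally show ?thesis using \<open>B > 0\<close> by (simp add: field_simps)
qed

lemma Cauchy_Schwarz_integral:
  assumes f: "square_integrable M f" and g: "square_integrable M g"
  shows "(LINT x|M. f x * g x)\<^sup>2 \<le> (LINT x|M. (f x)\<^sup>2) * (LINT x|M. (g x)\<^sup>2)"
proof (rule quadratic_nonneg_imp_discriminant_le)
  show "0 \<le> (LINT x|M. (g x)\<^sup>2)" by simp
next
  fix t
  have "0 \<le> (LINT x|M. (f x + t * g x)\<^sup>2)" by simp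
  also have "\<dots> = (LINT x|M. (f x)\<^sup>2 + 2 * t * (f x * g x) + t\<^sup>2 * (g x)\<^sup>2)"
    by (rule Bochner_Integration.integral_cong) (auto simp: power2_eq_square algebra_simps)
  also have "\<dots> = (LINT x|M. (f x)\<^sup>2) + 2 * t * (LINT x|M. f x * g x) + t\<^sup>2 * (LINT x|M. (g x)\<^sup>2)"
    using f g integrable_mult_square_integrable[OF f g] by (simp add: square_integrable_def)
  finally show "0 \<le> (LINT x|M. (f x)\<^sup>2) + 2 * t * (LINT x|M. f x * g x) + t\<^sup>2 * (LINT x|M. (g x)\<^sup>2)" .
qed

lemma mean_square_limit_integral_mult:
  assumes f: "\<And>n. square_integrable M (f n)" and h: "square_integrable M h"
    and g: "square_integrable M g" and lim: "mean_square_limit M f h"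
  shows "(\<lambda>n. LINT x|M. f n x * g x) \<longlonglongrightarrow> (LINT x|M. h x * g x)"
proof -
  have diff: "(LINT x|M. f n x * g x) - (LINT x|M. h x * g x) = - (LINT x|M. (h x - f n x) * g x)" for n
    using integrable_mult_square_integrable[OF f g] integrable_mult_square_integrable[OF h g]
    by (simp add: left_diff_distrib)
  have "(\<lambda>n. (LINT x|M. (h x - f n x)\<^sup>2) * (LINT x|M. (g x)\<^sup>2)) \<longlonglongrightarrow> 0"
    using tendsto_mult_left_zero[OF lim[unfolded mean_square_limit_def]] by simp
  then have "(\<lambda>n. (LINT x|M. (h x - f n x) * g x)\<^sup>2) \<longlonglongrightarrow> 0"
    by (rule Lim_null_comparison[rotated])
      (simp add: Cauchy_Schwarz_integral[OF square_integrable_diff[OF h f] g])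
  then have "(\<lambda>n. sqrt ((LINT x|M. (h x - f n x) * g x)\<^sup>2)) \<longlonglongrightarrow> sqrt 0"
    by (rule tendsto_real_sqrt)
  then have "(\<lambda>n. LINT x|M. (h x - f n x) * g x) \<longlonglongrightarrow> 0"
    by (simp add: tendsto_rabs_zero_iff)
  then have "(\<lambda>n. (LINT x|M. f n x * g x) - (LINT x|M. h x * g x)) \<longlonglongrightarrow> 0"
    unfolding diff using tendsto_minus by fastforce
  then show ?thesis by (simp add: LIM_zero_iff)
qed

lemma mean_square_limit_add:
  assumes f: "\<And>n. square_integrable M (f n)" and g: "\<And>n. square_integrable M (g n)"
    and a: "square_integrable M a" and b: "square_integrable M b"
    and fa: "mean_square_limit M f a" and gb: "mean_square_limit M g b"
  shows "mean_square_limit M (\<lambda>n x. f n x + g n x) (\<lambda>x. a x + b x)"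
  unfolding mean_square_limit_def
proof (rule Lim_null_comparison)
  show "(\<lambda>n. 2 * (LINT x|M. (a x - f n x)\<^sup>2) + 2 * (LINT x|M. (b x - g n x)\<^sup>2)) \<longlonglongrightarrow> 0"
    using fa gb unfolding mean_square_limit_def by (intro tendsto_add_zero tendsto_mult_right_zero)
  have "(LINT x|M. (a x + b x - (f n x + g n x))\<^sup>2)
      \<le> (LINT x|M. 2 * (a x - f n x)\<^sup>2 + 2 * (b x - g n x)\<^sup>2)" for n
  proof (rule integral_mono)
    show "integrable M (\<lambda>x. (a x + b x - (f n x + g n x))\<^sup>2)"
      by (intro integrable_square square_integrable_diff square_integrable_add f g a b)
    show "integrable M (\<lambda>x. 2 * (a x - f n x)\<^sup>2 + 2 * (b x - g n x)\<^sup>2)"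
      using integrable_square[OF square_integrable_diff[OF a f]]
        integrable_square[OF square_integrable_diff[OF b g]] by simp
    show "(a x + b x - (f n x + g n x))\<^sup>2 \<le> 2 * (a x - f n x)\<^sup>2 + 2 * (b x - g n x)\<^sup>2" for x
      using zero_le_power2[of "(a x - f n x) - (b x - g n x)"] by (simp add: power2_eq_square algebra_simps)
  qed
  also have "(LINT x|M. 2 * (a x - f n x)\<^sup>2 + 2 * (b x - g n x)\<^sup>2)
      = 2 * (LINT x|M. (a x - f n x)\<^sup>2) + 2 * (LINT x|M. (b x - g n x)\<^sup>2)" for n
    using integrable_square[OF square_integrable_diff[OF a f]]
      integrable_square[OF square_integrable_diff[OF b g]] by simp
  finally show "\<forall>\<^sub>F n in sequentially. norm (LINT x|M. (a x + b x - (f n x + g n x))\<^sup>2)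
      \<le> 2 * (LINT x|M. (a x - f n x)\<^sup>2) + 2 * (LINT x|M. (b x - g n x)\<^sup>2)"
    by simp
qed

lemma mean_square_limit_mult_bounded:
  assumes f: "\<And>n. square_integrable M (f n)" and g: "square_integrable M g"
    and b: "b \<in> borel_measurable M" "\<And>x. \<bar>b x\<bar> \<le> B" and fg: "mean_square_limit M f g"
  shows "mean_square_limit M (\<lambda>n x. f n x * b x) (\<lambda>x. g x * b x)"
  unfolding mean_square_limit_def
proof (rule Lim_null_comparison)
  show "(\<lambda>n. B\<^sup>2 * (LINT x|M. (g x - f n x)\<^sup>2)) \<longlonglongrightarrow> 0"
    using tendsto_mult_right_zero[OF fg[unfolded mean_square_limit_def]] by simp
  have "(LINT x|M. (g x * b x - f n x * b x)\<^sup>2) \<le> (LINT x|M. B\<^sup>2 * (g x - f n x)\<^sup>2)" for n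
  proof (rule integral_mono)
    have "square_integrable M (\<lambda>x. (g x - f n x) * b x)"
      by (rule square_integrable_mult_bounded[OF square_integrable_diff[OF g f] b])
    then show "integrable M (\<lambda>x. (g x * b x - f n x * b x)\<^sup>2)"
      by (simp add: integrable_square left_diff_distrib)
    show "integrable M (\<lambda>x. B\<^sup>2 * (g x - f n x)\<^sup>2)"
      using integrable_square[OF square_integrable_diff[OF g f]] by simp
    show "(g x * b x - f n x * b x)\<^sup>2 \<le> B\<^sup>2 * (g x - f n x)\<^sup>2" for x
    proof -
      have "(b x)\<^sup>2 \<le> B\<^sup>2"
        using b(2)[of x] by (metis abs_le_square_iff abs_of_nonneg abs_ge_zero order.trans)
      then show ?thesis
        by (metis left_diff_distrib power_mult_distrib mult.commute mult_left_mono zero_le_power2)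
    qed
  qed
  then show "\<forall>\<^sub>F n in sequentially. norm (LINT x|M. (g x * b x - f n x * b x)\<^sup>2)
      \<le> B\<^sup>2 * (LINT x|M. (g x - f n x)\<^sup>2)"
    by simp
qed

lemma mean_square_limit_integral_mult_left:
  assumes "\<And>n. square_integrable M (f n)" "square_integrable M h" "square_integrable M g"
    and "mean_square_limit M f h"
  shows "(\<lambda>n. LINT x|M. g x * f n x) \<longlonglongrightarrow> (LINT x|M. g x * h x)"
  using mean_square_limit_integral_mult[OF assms] by (simp add: mult.commute)

definition fourier_coeff :: "'a measure \<Rightarrow> (nat \<Rightarrow> 'a \<Rightarrow> real) \<Rightarrow> ('a \<Rightarrow> real) \<Rightarrow> nat \<Rightarrow> real" where
  "fourier_coeff M e f j = (LINT x|M. f x * e j x)"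

definition orthonormal_system :: "'a measure \<Rightarrow> (nat \<Rightarrow> 'a \<Rightarrow> real) \<Rightarrow> bool" where
  "orthonormal_system M e \<longleftrightarrow> (\<forall>j. square_integrable M (e j)) \<and>
     (\<forall>j k. (LINT x|M. e j x * e k x) = (if j = k then 1 else 0))"

definition complete_orthonormal_system :: "'a measure \<Rightarrow> (nat \<Rightarrow> 'a \<Rightarrow> real) \<Rightarrow> bool" where
  "complete_orthonormal_system M e \<longleftrightarrow> orthonormal_system M e \<and>
     (\<forall>f. square_integrable M f \<longrightarrow>
        mean_square_limit M (\<lambda>n x. \<Sum>j<n. fourier_coeff M e f j * e j x) f)"

lemma integral_sum_mult:
  assumes "\<And>j. j \<in> A \<Longrightarrow> square_integrable M (e j)" "square_integrable M h"
  shows "(LINT x|M. (\<Sum>j\<in>A. c j * e j x) * h x) = (\<Sum>j\<in>A. c j * (LINT x|M. e j x * h x))"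
proof -
  have "(LINT x|M. (\<Sum>j\<in>A. c j * e j x) * h x) = (LINT x|M. (\<Sum>j\<in>A. c j * (e j x * h x)))"
    by (simp add: sum_distrib_right mult.assoc)
  also have "\<dots> = (\<Sum>j\<in>A. (LINT x|M. c j * (e j x * h x)))"
    using assms integrable_mult_square_integrable by (intro Bochner_Integration.integral_sum) auto
  finally show ?thesis by simp
qed

lemma orthonormal_system_square_integrable:
  "orthonormal_system M e \<Longrightarrow> square_integrable M (e j)"
  by (simp add: orthonormal_system_def)

lemma square_integrable_orthonormal_sum:
  "orthonormal_system M e \<Longrightarrow> square_integrable M (\<lambda>x. \<Sum>j\<in>A. c j * e j x)"
  by (intro square_integrable_sum square_integrable_cmult orthonormal_system_square_integrable)

lemma integral_orthonormal_sum_mult: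
  assumes "orthonormal_system M e" "finite A"
  shows "(LINT x|M. (\<Sum>j\<in>A. c j * e j x) * e k x) = (if k \<in> A then c k else 0)"
proof -
  have "(LINT x|M. (\<Sum>j\<in>A. c j * e j x) * e k x) = (\<Sum>j\<in>A. c j * (if j = k then 1 else 0))"
    using assms integral_sum_mult[of A M e "e k" c] by (simp add: orthonormal_system_def)
  then show ?thesis
    using assms(2) by (simp add: if_distrib sum.delta cong: if_cong)
qed

lemma integral_orthonormal_sum_square:
  assumes "orthonormal_system M e" "finite A"
  shows "(LINT x|M. (\<Sum>j\<in>A. c j * e j x)\<^sup>2) = (\<Sum>j\<in>A. (c j)\<^sup>2)"
proof -
  have "(LINT x|M. (\<Sum>j\<in>A. c j * e j x)\<^sup>2)
      = (\<Sum>j\<in>A. c j * (LINT x|M. e j x * (\<Sum>i\<in>A. c i * e i x)))"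
    unfolding power2_eq_square using assms
    by (intro integral_sum_mult orthonormal_system_square_integrable square_integrable_orthonormal_sum)
  also have "\<dots> = (\<Sum>j\<in>A. c j * c j)"
    using integral_orthonormal_sum_mult[OF assms, of c] by (intro sum.cong) (simp_all add: mult.commute)
  finally show ?thesis by (simp add: power2_eq_square)
qed

lemma Parseval:
  assumes e: "complete_orthonormal_system M e" and a: "square_integrable M a" and b: "square_integrable M b"
  shows "(\<lambda>j. fourier_coeff M e a j * fourier_coeff M e b j) sums (LINT x|M. a x * b x)"
proof -
  have O: "orthonormal_system M e" using e by (simp add: complete_orthonormal_system_def)
  let ?S = "\<lambda>n x. \<Sum>j<n. fourier_coeff M e a j * e j x"
  have "(\<lambda>n. LINT x|M. ?S n x * b x) \<longlonglongrightarrow> (LINT x|M. a x * b x)"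
    using e a b square_integrable_orthonormal_sum[OF O]
    by (intro mean_square_limit_integral_mult) (auto simp: complete_orthonormal_system_def)
  moreover have "(LINT x|M. ?S n x * b x) = (\<Sum>j<n. fourier_coeff M e a j * fourier_coeff M e b j)" for n
    using O b by (subst integral_sum_mult)
      (auto simp: orthonormal_system_square_integrable fourier_coeff_def mult.commute)
  ultimately show ?thesis by (simp add: sums_def)
qed

lemma AE_summable_of_integral_square_le:
  assumes d: "\<And>k. square_integrable M (d k)" and le: "\<And>k. (LINT x|M. (d k x)\<^sup>2) \<le> (1/8)^k"
  shows "AE x in M. summable (\<lambda>k. d k x)"
proof -
  have "summable (\<lambda>k. 4^k * (LINT x|M. (d k x)\<^sup>2))"
  proof (rule summable_comparison_test)
    show "summable (\<lambda>k. (1/2::real)^k)" by simp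
    have "4^k * (LINT x|M. (d k x)\<^sup>2) \<le> (4::real)^k * (1/8)^k" for k
      by (rule mult_left_mono[OF le]) simp
    then show "\<exists>N. \<forall>k\<ge>N. norm (4^k * (LINT x|M. (d k x)\<^sup>2)) \<le> (1/2)^k"
      by (simp add: power_mult_distrib[symmetric])
  qed
  then have "(\<integral>\<^sup>+x. (\<Sum>k. ennreal (4^k * (d k x)\<^sup>2)) \<partial>M) \<noteq> \<infinity>"
    using d by (simp add: nn_integral_suminf nn_integral_eq_integral integrable_square
        ennreal_suminf_neq_top)
  then have "AE x in M. (\<Sum>k. ennreal (4^k * (d k x)\<^sup>2)) \<noteq> \<infinity>"
    using d by (intro nn_integral_PInf_AE) auto
  then show ?thesis
  proof (rule AE_mp, intro AE_I2 impI)
    fix x assume "(\<Sum>k. ennreal (4^k * (d k x)\<^sup>2)) \<noteq> \<infinity>"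
    then have "summable (\<lambda>k. 4^k * (d k x)\<^sup>2)"
      by (intro summable_suminf_not_top) auto
    then have "(\<lambda>k. 4^k * (d k x)\<^sup>2) \<longlonglongrightarrow> 0"
      by (rule summable_LIMSEQ_zero)
    then have "\<forall>\<^sub>F k in sequentially. 4^k * (d k x)\<^sup>2 < 1"
      by (rule order_tendstoD) simp
    then have "\<forall>\<^sub>F k in sequentially. norm (d k x) \<le> (1/2)^k"
    proof (rule eventually_mono)
      fix k assume "4^k * (d k x)\<^sup>2 < 1"
      moreover have "((2::real)^k)\<^sup>2 = 4^k"
        by (simp only: power2_eq_square power_mult_distrib[symmetric]) simp
      ultimately have "(2^k * \<bar>d k x\<bar>)\<^sup>2 < 1\<^sup>2"
        by (simp only: power_mult_distrib power2_abs) simp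
      then have "2^k * \<bar>d k x\<bar> < 1" by (rule power_less_imp_less_base) simp
      then show "norm (d k x) \<le> (1/2)^k" by (simp add: field_simps power_divide)
    qed
    then show "summable (\<lambda>k. d k x)"
      by (rule summable_comparison_test_ev) simp
  qed
qed

lemma integral_square_le_of_AE_tendsto:
  assumes s: "\<And>k. square_integrable M (s k)" and g: "g \<in> borel_measurable M"
    and lim: "AE x in M. (\<lambda>k. s k x) \<longlonglongrightarrow> g x"
    and le: "\<forall>\<^sub>F k in sequentially. (LINT x|M. (s k x)\<^sup>2) \<le> c"
  shows "integrable M (\<lambda>x. (g x)\<^sup>2)" and "(LINT x|M. (g x)\<^sup>2) \<le> c"
proof -
  have "(\<integral>\<^sup>+x. ennreal ((g x)\<^sup>2) \<partial>M) = (\<integral>\<^sup>+x. liminf (\<lambda>k. ennreal ((s k x)\<^sup>2)) \<partial>M)"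
    using lim
  proof (intro nn_integral_cong_AE, eventually_elim)
    case (elim x)
    then have "(\<lambda>k. ennreal ((s k x)\<^sup>2)) \<longlonglongrightarrow> ennreal ((g x)\<^sup>2)"
      by (intro tendsto_ennrealI tendsto_power)
    from lim_imp_Liminf[OF trivial_limit_sequentially this] show ?case by (rule sym)
  qed
  also have "\<dots> \<le> liminf (\<lambda>k. \<integral>\<^sup>+x. ennreal ((s k x)\<^sup>2) \<partial>M)"
    using s by (intro nn_integral_liminf) auto
  also have "\<dots> = liminf (\<lambda>k. ennreal (LINT x|M. (s k x)\<^sup>2))"
    using s by (simp add: nn_integral_eq_integral integrable_square)
  also have "\<dots> \<le> ennreal c"
    using le by (intro order.trans[OF Liminf_le_Limsup Limsup_bounded])
      (auto elim: eventually_mono intro: ennreal_leI)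
  finally have bound: "(\<integral>\<^sup>+x. ennreal ((g x)\<^sup>2) \<partial>M) \<le> ennreal c" .
  then show int: "integrable M (\<lambda>x. (g x)\<^sup>2)"
    using g order.strict_trans1[OF bound ennreal_less_top] by (intro integrableI_bounded) simp_all
  from le obtain k where "(LINT x|M. (s k x)\<^sup>2) \<le> c"
    by (auto simp: eventually_sequentially)
  moreover have "0 \<le> (LINT x|M. (s k x)\<^sup>2)" by simp
  ultimately have "0 \<le> c" by linarith
  then show "(LINT x|M. (g x)\<^sup>2) \<le> c"
    using bound int by (simp add: nn_integral_eq_integral)
qed

lemma AE_convergent_subseq_of_mean_square_Cauchy:
  assumes f: "\<And>n. square_integrable M (f n)"
    and Cauchy: "\<And>e. 0 < e \<Longrightarrow> \<exists>N. \<forall>m\<ge>N. \<forall>n\<ge>N. (LINT x|M. (f m x - f n x)\<^sup>2) < e"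
  shows "\<exists>r. (\<forall>k. k \<le> r k) \<and> (AE x in M. convergent (\<lambda>k. f (r k) x))"
proof -
  have "\<forall>k. \<exists>K. \<forall>m\<ge>K. \<forall>n\<ge>K. (LINT x|M. (f m x - f n x)\<^sup>2) < (1/8)^k"
    by (intro allI Cauchy) simp
  from choice[OF this] obtain N
    where N: "\<forall>k. \<forall>m\<ge>N k. \<forall>n\<ge>N k. (LINT x|M. (f m x - f n x)\<^sup>2) < (1/8)^k"
    by blast
  define r where "r k = (\<Sum>i\<le>k. N i) + k" for k
  have "mono r" unfolding r_def by (intro monoI add_mono sum_mono2) auto
  have r_ge: "N k \<le> r k" "k \<le> r k" for k
    unfolding r_def using member_le_sum[of k "{..k}" N] by auto
  define d where "d k x = f (r (Suc k)) x - f (r k) x" for k x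
  have "AE x in M. summable (\<lambda>k. d k x)"
  proof (rule AE_summable_of_integral_square_le)
    show "square_integrable M (d k)" for k unfolding d_def by (intro square_integrable_diff f)
    show "(LINT x|M. (d k x)\<^sup>2) \<le> (1/8)^k" for k
    proof -
      have "N k \<le> r (Suc k)" using r_ge(1)[of k] monoD[OF \<open>mono r\<close>, of k "Suc k"] by simp
      then show ?thesis
        unfolding d_def using less_imp_le[OF N[rule_format, OF _ r_ge(1)]] by simp
    qed
  qed
  then have "AE x in M. convergent (\<lambda>k. f (r k) x)"
  proof (rule AE_mp, intro AE_I2 impI)
    fix x assume "summable (\<lambda>k. d k x)"
    moreover have "(\<lambda>k. f (r k) x) = (\<lambda>k. f (r 0) x + (\<Sum>i<k. d i x))"
      unfolding d_def by (rule ext) (simp add: sum_lessThan_telescope[of "\<lambda>i. f (r i) x"])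
    ultimately show "convergent (\<lambda>k. f (r k) x)"
      by (simp only: summable_iff_convergent convergent_add_const_iff)
  qed
  with r_ge(2) show ?thesis by blast
qed

lemma square_integrable_complete:
  assumes f: "\<And>n. square_integrable M (f n)"
    and Cauchy: "\<And>e. 0 < e \<Longrightarrow> \<exists>N. \<forall>m\<ge>N. \<forall>n\<ge>N. (LINT x|M. (f m x - f n x)\<^sup>2) < e"
  obtains g where "square_integrable M g" "mean_square_limit M f g"
proof -
  obtain r where r: "\<And>k. k \<le> r k" and conv: "AE x in M. convergent (\<lambda>k. f (r k) x)"
    using AE_convergent_subseq_of_mean_square_Cauchy[OF f Cauchy] by blast
  define g where "g x = lim (\<lambda>k. f (r k) x)" for x
  have g_meas: "g \<in> borel_measurable M" unfolding g_def using f by measurable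
  have g_lim: "AE x in M. (\<lambda>k. f (r k) x) \<longlonglongrightarrow> g x"
    using conv by eventually_elim (simp add: g_def convergent_LIMSEQ_iff)
  have tail: "integrable M (\<lambda>x. (g x - f n x)\<^sup>2) \<and> (LINT x|M. (g x - f n x)\<^sup>2) \<le> e"
    if "0 < e" "\<forall>m\<ge>K. \<forall>n\<ge>K. (LINT x|M. (f m x - f n x)\<^sup>2) < e" "K \<le> n" for e K n
  proof -
    have "square_integrable M (\<lambda>x. f (r k) x - f n x)" for k by (intro square_integrable_diff f)
    moreover have "(\<lambda>x. g x - f n x) \<in> borel_measurable M" using g_meas f by measurable
    moreover have "AE x in M. (\<lambda>k. f (r k) x - f n x) \<longlonglongrightarrow> g x - f n x"
      using g_lim by eventually_elim (intro tendsto_diff tendsto_const)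
    moreover have "\<forall>\<^sub>F k in sequentially. (LINT x|M. (f (r k) x - f n x)\<^sup>2) \<le> e"
      unfolding eventually_sequentially
    proof (intro exI allI impI)
      fix k assume "K \<le> k"
      then have "K \<le> r k" using r[of k] by linarith
      then show "(LINT x|M. (f (r k) x - f n x)\<^sup>2) \<le> e" using that(2,3) by (simp add: less_imp_le)
    qed
    ultimately show ?thesis
      using integral_square_le_of_AE_tendsto[where s="\<lambda>k x. f (r k) x - f n x" and g="\<lambda>x. g x - f n x"]
      by blast
  qed
  obtain K0 where "\<forall>m\<ge>K0. \<forall>n\<ge>K0. (LINT x|M. (f m x - f n x)\<^sup>2) < 1"
    using Cauchy[of 1] by auto
  then have "square_integrable M (\<lambda>x. (g x - f K0 x) + f K0 x)"
    using tail[of 1 K0 K0] g_meas f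
    by (intro square_integrable_add) (auto simp: square_integrable_def borel_measurable_diff)
  then have "square_integrable M g" by simp
  moreover have "mean_square_limit M f g"
    unfolding mean_square_limit_def
  proof (rule LIMSEQ_I)
    fix e :: real assume "0 < e"
    then obtain K where "\<forall>m\<ge>K. \<forall>n\<ge>K. (LINT x|M. (f m x - f n x)\<^sup>2) < e / 2"
      using Cauchy[of "e / 2"] by auto
    then have "norm (LINT x|M. (g x - f n x)\<^sup>2) < e" if "K \<le> n" for n
      using tail[of "e / 2" K n] that \<open>0 < e\<close> by simp
    then show "\<exists>K. \<forall>n\<ge>K. norm ((LINT x|M. (g x - f n x)\<^sup>2) - 0) < e" by auto
  qed
  ultimately show ?thesis by (rule that)
qed

theorem Riesz_Fischer:
  assumes e: "orthonormal_system M e" and c: "summable (\<lambda>j. (c j)\<^sup>2)"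
  shows "\<exists>g. square_integrable M g \<and> (\<forall>j. fourier_coeff M e g j = c j)"
proof -
  define S where "S n x = (\<Sum>j<n. c j * e j x)" for n x
  have S: "square_integrable M (S n)" for n
    unfolding S_def by (rule square_integrable_orthonormal_sum[OF e])
  have S_diff: "(LINT x|M. (S m x - S n x)\<^sup>2) = (\<Sum>j\<in>{n..<m}. (c j)\<^sup>2)" if "n \<le> m" for m n
  proof -
    have "S m x - S n x = (\<Sum>j\<in>{n..<m}. c j * e j x)" for x
      unfolding S_def using sum_diff_nat_ivl[of 0 n m] that by (simp add: atLeast0LessThan)
    then show ?thesis using integral_orthonormal_sum_square[OF e] by simp
  qed
  obtain g where g: "square_integrable M g" "mean_square_limit M S g"
  proof (rule square_integrable_complete[OF S])
    fix \<epsilon> :: real assume "0 < \<epsilon>"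
    then obtain K where K: "\<forall>n\<ge>K. \<forall>m. norm (\<Sum>j\<in>{n..<m}. (c j)\<^sup>2) < \<epsilon>"
      using c unfolding summable_Cauchy by blast
    have "(LINT x|M. (S m x - S n x)\<^sup>2) < \<epsilon>" if "K \<le> m" "K \<le> n" for m n
    proof (cases "n \<le> m")
      case True then show ?thesis using S_diff[OF True] K that(2) by (simp add: abs_less_iff)
    next
      case False then show ?thesis
        using S_diff[of m n] K that by (simp add: power2_commute[of "S m _"] abs_less_iff)
    qed
    then show "\<exists>K. \<forall>m\<ge>K. \<forall>n\<ge>K. (LINT x|M. (S m x - S n x)\<^sup>2) < \<epsilon>" by blast
  qed
  have "fourier_coeff M e g j = c j" for j
  proof (rule LIMSEQ_unique)
    show "(\<lambda>n. LINT x|M. S n x * e j x) \<longlonglongrightarrow> fourier_coeff M e g j"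
      unfolding fourier_coeff_def
      by (rule mean_square_limit_integral_mult[OF S g(1) orthonormal_system_square_integrable[OF e] g(2)])
    have "\<forall>\<^sub>F n in sequentially. (LINT x|M. S n x * e j x) = c j"
      unfolding S_def eventually_sequentially
      using integral_orthonormal_sum_mult[OF e, of "{..<_}" c j] by (intro exI[of _ "Suc j"]) auto
    then show "(\<lambda>n. LINT x|M. S n x * e j x) \<longlonglongrightarrow> c j" by (rule tendsto_eventually)
  qed
  with g(1) show ?thesis by blast
qed

lemma integral_square_diff:
  assumes "square_integrable M g" "square_integrable M s"
  shows "(LINT x|M. (g x - s x)\<^sup>2)
    = (LINT x|M. (g x)\<^sup>2) - 2 * (LINT x|M. s x * g x) + (LINT x|M. s x * s x)"
proof -
  have "(LINT x|M. (g x - s x)\<^sup>2) = (LINT x|M. (g x)\<^sup>2 - 2 * (s x * g x) + s x * s x)"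
    by (rule Bochner_Integration.integral_cong) (auto simp: power2_eq_square algebra_simps)
  also have "\<dots> = (LINT x|M. (g x)\<^sup>2) - 2 * (LINT x|M. s x * g x) + (LINT x|M. s x * s x)"
    using integrable_square[OF assms(1)] integrable_mult_square_integrable[OF assms(2,1)]
      integrable_mult_square_integrable[OF assms(2,2)] by simp
  finally show ?thesis .
qed

lemma sum_integral_sum_mult:
  assumes "\<And>j i. square_integrable M (E j i)" "\<And>i. square_integrable M (H i)"
  shows "(\<Sum>i\<in>I. LINT x|M. (\<Sum>j\<in>J. c j * E j i x) * H i x)
    = (\<Sum>j\<in>J. c j * (\<Sum>i\<in>I. LINT x|M. E j i x * H i x))"
proof -
  have "(\<Sum>i\<in>I. LINT x|M. (\<Sum>j\<in>J. c j * E j i x) * H i x)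
      = (\<Sum>i\<in>I. \<Sum>j\<in>J. c j * (LINT x|M. E j i x * H i x))"
    by (intro sum.cong refl integral_sum_mult assms)
  also have "\<dots> = (\<Sum>j\<in>J. c j * (\<Sum>i\<in>I. LINT x|M. E j i x * H i x))"
    by (subst sum.swap) (simp add: sum_distrib_left)
  finally show ?thesis .
qed

lemma Bessel_inequality_orthogonal_fields:
  fixes E :: "nat \<Rightarrow> 'i::finite \<Rightarrow> 'a \<Rightarrow> real" and G :: "'i \<Rightarrow> 'a \<Rightarrow> real"
  assumes E: "\<And>j i. square_integrable M (E j i)" and G: "\<And>i. square_integrable M (G i)"
    and orth: "\<And>j k. (\<Sum>i\<in>UNIV. LINT x|M. E j i x * E k i x) = lam j * (if j = k then 1 else 0)"
    and proj: "\<And>j. (\<Sum>i\<in>UNIV. LINT x|M. E j i x * G i x) = lam j * c j"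
  shows "(\<Sum>j<n. lam j * (c j)\<^sup>2) \<le> (\<Sum>i\<in>UNIV. LINT x|M. (G i x)\<^sup>2)"
proof -
  define S where "S i x = (\<Sum>j<n. c j * E j i x)" for i x
  have S_sq: "square_integrable M (S i)" for i
    unfolding S_def by (intro square_integrable_sum square_integrable_cmult E)
  have S_inner: "(\<Sum>i\<in>UNIV. LINT x|M. S i x * H i x) = (\<Sum>j<n. c j * (\<Sum>i\<in>UNIV. LINT x|M. E j i x * H i x))"
    if "\<And>i. square_integrable M (H i)" for H
    unfolding S_def using E that by (rule sum_integral_sum_mult)
  have "(\<Sum>i\<in>UNIV. LINT x|M. S i x * G i x) = (\<Sum>j<n. c j * (lam j * c j))"
    using S_inner[of G] G proj by simp
  then have SG: "(\<Sum>i\<in>UNIV. LINT x|M. S i x * G i x) = (\<Sum>j<n. lam j * (c j)\<^sup>2)"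
    by (simp add: power2_eq_square mult_ac)
  have "(\<Sum>i\<in>UNIV. LINT x|M. E j i x * S i x) = c j * lam j" if "j < n" for j
  proof -
    have "(\<Sum>i\<in>UNIV. LINT x|M. E j i x * S i x) = (\<Sum>k<n. c k * (\<Sum>i\<in>UNIV. LINT x|M. E k i x * E j i x))"
      using S_inner[OF E[of j]] by (simp add: mult.commute)
    also have "\<dots> = c j * lam j"
      using that by (simp add: orth if_distrib sum.delta cong: if_cong)
    finally show ?thesis .
  qed
  then have "(\<Sum>i\<in>UNIV. LINT x|M. S i x * S i x) = (\<Sum>j<n. c j * (c j * lam j))"
    using S_inner[of S] S_sq by simp
  then have SS: "(\<Sum>i\<in>UNIV. LINT x|M. S i x * S i x) = (\<Sum>j<n. lam j * (c j)\<^sup>2)"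
    by (simp add: power2_eq_square mult_ac)
  have "0 \<le> (\<Sum>i\<in>UNIV. LINT x|M. (G i x - S i x)\<^sup>2)"
    by (intro sum_nonneg integral_nonneg_AE AE_I2 zero_le_power2)
  also have "\<dots> = (\<Sum>i\<in>UNIV. LINT x|M. (G i x)\<^sup>2) - 2 * (\<Sum>i\<in>UNIV. LINT x|M. S i x * G i x)
      + (\<Sum>i\<in>UNIV. LINT x|M. S i x * S i x)"
    by (simp add: integral_square_diff[OF G S_sq] sum.distrib sum_subtractf sum_distrib_left)
  also have "\<dots> = (\<Sum>i\<in>UNIV. LINT x|M. (G i x)\<^sup>2) - (\<Sum>j<n. lam j * (c j)\<^sup>2)"
    unfolding SG SS by simp
  finally show ?thesis by simp
qed

section \<open>Smooth functions and test functions\<close>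

lemma smooth_differentiable: "smooth f \<Longrightarrow> f differentiable (at x)"
  by (erule smooth.cases) auto

lemma smooth_pd: "smooth f \<Longrightarrow> smooth (pd i f)"
  by (erule smooth.cases) auto

lemma smooth_isCont: "smooth f \<Longrightarrow> isCont f x"
  by (simp add: differentiable_imp_continuous_within smooth_differentiable)

lemma pd_eq_derivative: "(f has_derivative f') (at x) \<Longrightarrow> pd i f x = f' (axis i 1)"
  unfolding pd_def using frechet_derivative_at by metis

lemma smooth_has_derivative:
  "smooth f \<Longrightarrow> (f has_derivative frechet_derivative f (at x)) (at x)"
  using frechet_derivative_works smooth_differentiable by blast

lemma sum_lessThan_double: "(\<Sum>j<2 * (n::nat). h j) = (\<Sum>j<n. h (2 * j) + h (2 * j + 1) :: 'a::comm_monoid_add)"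
  by (induction n) (auto simp: sum.lessThan_Suc add.assoc)

text \<open>Coinduction on the class of finite sums of products of smooth functions, which is closed
  under partial differentiation by the product rule.\<close>

lemma smooth_mult:
  fixes f g :: "'n::finite fn"
  assumes "smooth f" "smooth g"
  shows "smooth (\<lambda>x. f x * g x)"
proof -
  define Q where "Q h \<longleftrightarrow> (\<exists>(n::nat) F G. (\<forall>j<n. smooth (F j) \<and> smooth (G j)) \<and>
    h = (\<lambda>x. \<Sum>j<n. F j x * G j x))" for h :: "'n fn"
  have "Q (\<lambda>x. f x * g x)"
    unfolding Q_def using assms by (intro exI[of _ 1] exI[of _ "\<lambda>_. f"] exI[of _ "\<lambda>_. g"]) auto
  then show ?thesis
  proof (rule smooth.coinduct[where X = Q])
    fix h assume "Q h"
    then obtain n :: nat and F G where FG: "\<forall>j<n. smooth (F j) \<and> smooth (G j)"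
      and h: "h = (\<lambda>x. \<Sum>j<n. F j x * G j x)"
      unfolding Q_def by blast
    have d: "(h has_derivative (\<lambda>v. \<Sum>j<n. F j x * frechet_derivative (G j) (at x) v
        + frechet_derivative (F j) (at x) v * G j x)) (at x)" for x
      unfolding h using FG by (intro has_derivative_sum has_derivative_mult smooth_has_derivative) auto
    have "Q (pd i h)" for i
    proof -
      define F' where "F' j = (if even j then pd i (F (j div 2)) else F (j div 2))" for j
      define G' where "G' j = (if even j then G (j div 2) else pd i (G (j div 2)))" for j
      have "pd i h x = (\<Sum>j<n. F j x * pd i (G j) x + pd i (F j) x * G j x)" for x
        using pd_eq_derivative[OF d, of i x] by (simp add: pd_def)
      also have "\<dots> x = (\<Sum>j<2 * n. F' j x * G' j x)" for x
        unfolding sum_lessThan_double F'_def G'_def by (auto intro!: sum.cong)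
      finally have "pd i h = (\<lambda>x. \<Sum>j<2 * n. F' j x * G' j x)" by auto
      moreover have "\<forall>j<2 * n. smooth (F' j) \<and> smooth (G' j)"
      proof -
        have "j div 2 < n" if "j < 2 * n" for j using that by presburger
        then show ?thesis unfolding F'_def G'_def using FG smooth_pd by auto
      qed
      ultimately show ?thesis unfolding Q_def by blast
    qed
    moreover have "h differentiable (at x)" for x using d differentiableI by blast
    ultimately show "\<exists>f. h = f \<and> (\<forall>x. f differentiable at x) \<and> (\<forall>i. Q (pd i f) \<or> smooth (pd i f))"
      by blast
  qed
qed

lemma pd_mult:
  assumes "smooth f" "smooth g"
  shows "pd i (\<lambda>x. f x * g x) x = pd i f x * g x + f x * pd i g x"
proof -
  have "((\<lambda>x. f x * g x) has_derivative
      (\<lambda>v. f x * frechet_derivative g (at x) v + frechet_derivative f (at x) v * g x)) (at x)"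
    by (intro has_derivative_mult smooth_has_derivative assms)
  from pd_eq_derivative[OF this] show ?thesis by (simp add: pd_def)
qed

lemma pd_eq_0_outside_support:
  assumes "x \<notin> closure {y. f y \<noteq> 0}"
  shows "pd i f x = 0"
proof -
  have "(f has_derivative (\<lambda>_. 0)) (at x)"
  proof (rule has_derivative_transform_within_open)
    show "((\<lambda>_. 0) has_derivative (\<lambda>_. 0)) (at x)" by (rule has_derivative_const)
    show "open (- closure {y. f y \<noteq> 0})" by auto
    show "0 = f y" if "y \<in> - closure {y. f y \<noteq> 0}" for y
      using that closure_subset[of "{y. f y \<noteq> 0}"] by auto
  qed (use assms in auto)
  from pd_eq_derivative[OF this] show ?thesis .
qed

lemma test_fun_smooth: "test_fun \<Omega> \<phi> \<Longrightarrow> smooth \<phi>"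
  by (simp add: test_fun_def)

lemma test_fun_support_subset:
  assumes "test_fun \<Omega> \<phi>" "smooth g" "{x. g x \<noteq> 0} \<subseteq> closure {x. \<phi> x \<noteq> 0}"
  shows "test_fun \<Omega> g"
proof -
  have sub: "closure {x. g x \<noteq> 0} \<subseteq> closure {x. \<phi> x \<noteq> 0}"
    using assms(3) by (rule closure_minimal) simp
  have "compact (closure {x. \<phi> x \<noteq> 0} \<inter> closure {x. g x \<noteq> 0})"
    using assms(1) by (intro compact_Int_closed) (simp_all add: test_fun_def)
  then show ?thesis
    using assms(1,2) sub by (auto simp: test_fun_def Int_absorb1)
qed

lemma test_fun_pd:
  assumes "test_fun \<Omega> \<phi>" shows "test_fun \<Omega> (pd i \<phi>)"
  using assms pd_eq_0_outside_support[of _ \<phi> i]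
  by (intro test_fun_support_subset[OF assms]) (auto simp: test_fun_def smooth_pd)

lemma test_fun_mult: "test_fun \<Omega> \<phi> \<Longrightarrow> smooth g \<Longrightarrow> test_fun \<Omega> (\<lambda>x. \<phi> x * g x)"
  by (rule test_fun_support_subset) (auto simp: test_fun_def smooth_mult intro: closure_subset[THEN subsetD])

lemma test_fun_bounded:
  assumes "test_fun \<Omega> \<phi>"
  obtains B where "\<And>x. \<bar>\<phi> x\<bar> \<le> B"
proof -
  let ?K = "closure {x. \<phi> x \<noteq> 0}"
  have "compact (\<phi> ` ?K)"
    using assms
    by (intro compact_continuous_image continuous_at_imp_continuous_on ballI smooth_isCont)
      (auto simp: test_fun_def)
  then have "bounded (insert 0 (\<phi> ` ?K))" by (simp add: compact_imp_bounded)
  moreover have "range \<phi> \<subseteq> insert 0 (\<phi> ` ?K)"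
    using closure_subset[of "{x. \<phi> x \<noteq> 0}"] by auto
  ultimately have "bounded (range \<phi>)" by (rule bounded_subset)
  then show ?thesis using that by (auto simp: bounded_real)
qed

lemma has_real_derivative_along_line:
  fixes f :: "'a::real_normed_vector \<Rightarrow> real"
  assumes "f differentiable (at (y + t *\<^sub>R v))"
  shows "((\<lambda>s. f (y + s *\<^sub>R v)) has_real_derivative frechet_derivative f (at (y + t *\<^sub>R v)) v) (at t)"
proof -
  let ?F = "frechet_derivative f (at (y + t *\<^sub>R v))"
  have fd: "(f has_derivative ?F) (at (y + t *\<^sub>R v))"
    using assms by (simp add: frechet_derivative_works)
  have "((\<lambda>s. y + s *\<^sub>R v) has_derivative (\<lambda>s. s *\<^sub>R v)) (at t)"
    by (auto intro!: derivative_eq_intros)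
  from has_derivative_compose[OF this fd]
  have "((\<lambda>s. f (y + s *\<^sub>R v)) has_derivative (\<lambda>s. ?F (s *\<^sub>R v))) (at t)" .
  moreover have "?F (s *\<^sub>R v) = ?F v * s" for s
    using linear_cmul[OF has_derivative_linear[OF fd]] by (simp add: mult.commute)
  ultimately show ?thesis by (simp add: has_field_derivative_def)
qed

lemma second_difference_mean_value:
  fixes f :: "'a::real_normed_vector \<Rightarrow> real"
  assumes df: "\<And>y. f differentiable (at y)"
    and dg: "\<And>y. (\<lambda>z. frechet_derivative f (at z) w) differentiable (at y)"
    and "0 < h"
  obtains \<sigma> \<tau> where "0 < \<sigma>" "\<sigma> < h" "0 < \<tau>" "\<tau> < h"
    "f (x + h *\<^sub>R v + h *\<^sub>R w) - f (x + h *\<^sub>R v) - f (x + h *\<^sub>R w) + f x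
       = h * h * frechet_derivative (\<lambda>z. frechet_derivative f (at z) w) (at (x + \<sigma> *\<^sub>R v + \<tau> *\<^sub>R w)) v"
proof -
  define g where "g z = frechet_derivative f (at z) w" for z
  define u where "u t = f ((x + h *\<^sub>R v) + t *\<^sub>R w) - f (x + t *\<^sub>R w)" for t
  have du: "(u has_real_derivative (g ((x + h *\<^sub>R v) + t *\<^sub>R w) - g (x + t *\<^sub>R w))) (at t)" for t
    unfolding u_def g_def by (intro DERIV_diff has_real_derivative_along_line df)
  obtain \<tau> where \<tau>: "0 < \<tau>" "\<tau> < h"
    "u h - u 0 = (h - 0) * (g ((x + h *\<^sub>R v) + \<tau> *\<^sub>R w) - g (x + \<tau> *\<^sub>R w))"
    using MVT2[OF \<open>0 < h\<close> du] by blast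
  define u' where "u' s = g ((x + \<tau> *\<^sub>R w) + s *\<^sub>R v)" for s
  have du': "(u' has_real_derivative frechet_derivative g (at ((x + \<tau> *\<^sub>R w) + s *\<^sub>R v)) v) (at s)" for s
    unfolding u'_def by (rule has_real_derivative_along_line) (use dg in \<open>simp add: g_def\<close>)
  obtain \<sigma> where \<sigma>: "0 < \<sigma>" "\<sigma> < h"
    "u' h - u' 0 = (h - 0) * frechet_derivative g (at ((x + \<tau> *\<^sub>R w) + \<sigma> *\<^sub>R v)) v"
    using MVT2[OF \<open>0 < h\<close> du'] by blast
  have swap: "(x + h *\<^sub>R v) + \<tau> *\<^sub>R w = (x + \<tau> *\<^sub>R w) + h *\<^sub>R v" by (simp add: algebra_simps)
  have "f (x + h *\<^sub>R v + h *\<^sub>R w) - f (x + h *\<^sub>R v) - f (x + h *\<^sub>R w) + f x = u h - u 0"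
    unfolding u_def by simp
  also have "\<dots> = h * (u' h - u' 0)" using \<tau>(3) unfolding u'_def swap by simp
  also have "\<dots> = h * h * frechet_derivative g (at (x + \<sigma> *\<^sub>R v + \<tau> *\<^sub>R w)) v"
    using \<sigma>(3) by (simp add: algebra_simps)
  finally show ?thesis using that \<sigma> \<tau> unfolding g_def by blast
qed

lemma pd_eq_frechet_derivative: "pd j f = (\<lambda>z. frechet_derivative f (at z) (axis j 1))"
  by (simp add: pd_def fun_eq_iff)

text \<open>Both mixed derivatives are attained, at points within \<open>2h\<close> of \<open>x\<close>, by the same second
  difference quotient with step \<open>h\<close>.\<close>

lemma mixed_pd_eq_nearby:
  fixes \<phi> :: "'n::finite fn"
  assumes "smooth \<phi>" and "0 < \<delta>"
  shows "\<exists>p q. dist p x < \<delta> \<and> dist q x < \<delta> \<and> pd i (pd k \<phi>) p = pd k (pd i \<phi>) q"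
proof -
  let ?v = "axis i (1::real)" and ?w = "axis k (1::real)"
  define h where "h = \<delta> / 2"
  have "0 < h" using assms(2) by (simp add: h_def)
  have df: "\<phi> differentiable (at y)" for y using assms(1) by (rule smooth_differentiable)
  have dg: "(\<lambda>z. frechet_derivative \<phi> (at z) (axis j 1)) differentiable (at y)" for j y
    using smooth_differentiable[OF smooth_pd[OF assms(1), of j]] by (simp add: pd_eq_frechet_derivative)
  have pd2: "pd j (pd l \<phi>) y
      = frechet_derivative (\<lambda>z. frechet_derivative \<phi> (at z) (axis l 1)) (at y) (axis j 1)" for j l y
    by (simp only: pd_def[of j] pd_eq_frechet_derivative[of l])
  have near: "dist (x + s *\<^sub>R a + t *\<^sub>R b) x < \<delta>"
    if "0 < s" "s < h" "0 < t" "t < h" "norm a = 1" "norm b = 1" for s t and a b :: "real^'n"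
  proof -
    have "dist (x + s *\<^sub>R a + t *\<^sub>R b) x \<le> norm (s *\<^sub>R a) + norm (t *\<^sub>R b)"
      by (simp add: dist_norm) (metis norm_scaleR norm_triangle_ineq)
    also have "\<dots> < \<delta>" using that by (simp add: h_def)
    finally show ?thesis .
  qed
  obtain \<sigma> \<tau> where st: "0 < \<sigma>" "\<sigma> < h" "0 < \<tau>" "\<tau> < h"
    "\<phi> (x + h *\<^sub>R ?v + h *\<^sub>R ?w) - \<phi> (x + h *\<^sub>R ?v) - \<phi> (x + h *\<^sub>R ?w) + \<phi> x
      = h * h * pd i (pd k \<phi>) (x + \<sigma> *\<^sub>R ?v + \<tau> *\<^sub>R ?w)"
    using second_difference_mean_value[OF df dg[of k] \<open>0 < h\<close>, where x = x and v = ?v]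
    unfolding pd2 by blast
  obtain \<sigma>' \<tau>' where st': "0 < \<sigma>'" "\<sigma>' < h" "0 < \<tau>'" "\<tau>' < h"
    "\<phi> (x + h *\<^sub>R ?w + h *\<^sub>R ?v) - \<phi> (x + h *\<^sub>R ?w) - \<phi> (x + h *\<^sub>R ?v) + \<phi> x
      = h * h * pd k (pd i \<phi>) (x + \<sigma>' *\<^sub>R ?w + \<tau>' *\<^sub>R ?v)"
    using second_difference_mean_value[OF df dg[of i] \<open>0 < h\<close>, where x = x and v = ?w]
    unfolding pd2 by blast
  have "\<phi> (x + h *\<^sub>R ?w + h *\<^sub>R ?v) = \<phi> (x + h *\<^sub>R ?v + h *\<^sub>R ?w)"
    by (simp add: algebra_simps)
  then have "h * h * pd i (pd k \<phi>) (x + \<sigma> *\<^sub>R ?v + \<tau> *\<^sub>R ?w)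
      = h * h * pd k (pd i \<phi>) (x + \<sigma>' *\<^sub>R ?w + \<tau>' *\<^sub>R ?v)"
    using st(5) st'(5) by linarith
  then have "pd i (pd k \<phi>) (x + \<sigma> *\<^sub>R ?v + \<tau> *\<^sub>R ?w) = pd k (pd i \<phi>) (x + \<sigma>' *\<^sub>R ?w + \<tau>' *\<^sub>R ?v)"
    using \<open>0 < h\<close> by simp
  then show ?thesis using near st st' by (intro exI conjI) auto
qed

lemma pd_commute:
  fixes \<phi> :: "'n::finite fn"
  assumes "smooth \<phi>"
  shows "pd i (pd k \<phi>) x = pd k (pd i \<phi>) x"
proof (rule ccontr)
  define e where "e = dist (pd i (pd k \<phi>) x) (pd k (pd i \<phi>) x) / 2"
  assume "pd i (pd k \<phi>) x \<noteq> pd k (pd i \<phi>) x"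
  then have "0 < e" by (simp add: e_def)
  have cont: "isCont (pd i (pd k \<phi>)) x" "isCont (pd k (pd i \<phi>)) x"
    using assms by (simp_all add: smooth_isCont smooth_pd)
  obtain \<delta>1 where "0 < \<delta>1"
    and \<delta>1: "\<And>p. dist p x < \<delta>1 \<Longrightarrow> dist (pd i (pd k \<phi>) p) (pd i (pd k \<phi>) x) < e"
    using cont(1) \<open>0 < e\<close> unfolding continuous_at_eps_delta by blast
  obtain \<delta>2 where "0 < \<delta>2"
    and \<delta>2: "\<And>q. dist q x < \<delta>2 \<Longrightarrow> dist (pd k (pd i \<phi>) q) (pd k (pd i \<phi>) x) < e"
    using cont(2) \<open>0 < e\<close> unfolding continuous_at_eps_delta by blast
  obtain p q where "dist p x < min \<delta>1 \<delta>2" "dist q x < min \<delta>1 \<delta>2"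
    and "pd i (pd k \<phi>) p = pd k (pd i \<phi>) q"
    using mixed_pd_eq_nearby[OF assms, where \<delta> = "min \<delta>1 \<delta>2" and x = x and i = i and k = k]
      \<open>0 < \<delta>1\<close> \<open>0 < \<delta>2\<close> by auto
  moreover have "dist (pd i (pd k \<phi>) x) (pd k (pd i \<phi>) x)
      \<le> dist (pd i (pd k \<phi>) p) (pd i (pd k \<phi>) x) + dist (pd k (pd i \<phi>) q) (pd k (pd i \<phi>) x)"
    using dist_triangle[of "pd i (pd k \<phi>) x" "pd k (pd i \<phi>) x" "pd i (pd k \<phi>) p"]
    by (simp add: \<open>pd i (pd k \<phi>) p = pd k (pd i \<phi>) q\<close> dist_commute)
  ultimately show False using \<delta>1[of p] \<delta>2[of q] by (simp add: e_def)
qed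

section \<open>The Dirichlet eigenbasis and the operator \<open>\<Lambda>\<close>\<close>

lemma sum_UNIV_two:
  fixes F :: "'n::finite \<Rightarrow> 'a::comm_monoid_add"
  assumes "i1 \<noteq> i2" "\<And>k. k \<noteq> i1 \<Longrightarrow> k \<noteq> i2 \<Longrightarrow> F k = 0"
  shows "(\<Sum>k\<in>UNIV. F k) = F i1 + F i2"
proof -
  have "(\<Sum>k\<in>UNIV. F k) = (\<Sum>k\<in>{i1, i2}. F k)"
    by (rule sum.mono_neutral_right) (use assms in auto)
  then show ?thesis using assms(1) by simp
qed

locale dirichlet_eigensystem =
  fixes \<Omega> :: "(real^'n::finite) set" and w :: "nat \<Rightarrow> 'n fn" and lam :: "nat \<Rightarrow> real"
  assumes open_domain: "open \<Omega>" and bounded_domain: "bounded \<Omega>"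
    and eigenbasis: "dirichlet_eigenbasis \<Omega> w lam"
begin

definition \<mu> :: "(real^'n) measure" where "\<mu> = restrict_space lebesgue \<Omega>"

lemma domain_sets: "\<Omega> \<inter> space lebesgue \<in> sets lebesgue"
  using lmeasurable_open[OF bounded_domain open_domain] by (simp add: fmeasurableD)

lemma integ_eq: "integ \<Omega> f = (LINT x|\<mu>. f x)"
  unfolding integ_def \<mu>_def set_lebesgue_integral_def
  by (rule integral_restrict_space[OF domain_sets, symmetric])

lemma L2_iff: "L2 \<Omega> f \<longleftrightarrow> square_integrable \<mu> f"
  unfolding L2_def square_integrable_def \<mu>_def set_borel_measurable_def
    borel_measurable_restrict_space_iff[OF domain_sets] set_integrable_eq[OF domain_sets] ..

lemma finite_measure_\<mu>: "finite_measure \<mu>"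
proof (rule finite_measureI)
  have "emeasure \<mu> (space \<mu>) = emeasure lebesgue \<Omega>"
    using domain_sets by (simp add: \<mu>_def emeasure_restrict_space space_restrict_space)
  also have "\<dots> < \<infinity>"
    using lmeasurable_open[OF bounded_domain open_domain] unfolding fmeasurable_def by blast
  finally show "emeasure \<mu> (space \<mu>) \<noteq> \<infinity>" by simp
qed

lemma smooth_measurable: "smooth g \<Longrightarrow> g \<in> borel_measurable \<mu>"
proof -
  assume "smooth g"
  then have "continuous_on UNIV g" by (intro continuous_at_imp_continuous_on ballI smooth_isCont)
  then have "g \<in> borel_measurable lborel"
    unfolding measurable_lborel2 by (rule borel_measurable_continuous_onI)
  then show ?thesis unfolding \<mu>_def by (intro measurable_restrict_space1 measurable_completion)
qed

lemma square_integrable_mult_test_fun: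
  assumes "square_integrable \<mu> f" "test_fun \<Omega> t"
  shows "square_integrable \<mu> (\<lambda>x. f x * t x)"
proof -
  obtain B where "\<And>x. \<bar>t x\<bar> \<le> B" using test_fun_bounded[OF assms(2)] by blast
  with assms show ?thesis
    by (intro square_integrable_mult_bounded smooth_measurable) (auto simp: test_fun_def)
qed

lemma mean_square_limit_mult_test_fun:
  assumes "\<And>n. square_integrable \<mu> (f n)" "square_integrable \<mu> g" "test_fun \<Omega> t"
    and "mean_square_limit \<mu> f g"
  shows "mean_square_limit \<mu> (\<lambda>n x. f n x * t x) (\<lambda>x. g x * t x)"
proof -
  obtain B where "\<And>x. \<bar>t x\<bar> \<le> B" using test_fun_bounded[OF assms(3)] by blast
  with assms show ?thesis
    by (intro mean_square_limit_mult_bounded smooth_measurable test_fun_smooth)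
qed

lemma square_integrable_test_fun:
  assumes "test_fun \<Omega> \<phi>" shows "square_integrable \<mu> \<phi>"
proof -
  obtain B where "\<And>x. \<bar>\<phi> x\<bar> \<le> B" using test_fun_bounded[OF assms] by blast
  with assms show ?thesis
    by (intro finite_measure.square_integrable_bounded[OF finite_measure_\<mu>] smooth_measurable)
      (auto simp: test_fun_def)
qed

lemma coef_eq: "coef \<Omega> w f j = fourier_coeff \<mu> w f j"
  unfolding coef_def fourier_coeff_def integ_eq ..

lemma H1_square_integrable: "H1 \<Omega> f \<Longrightarrow> square_integrable \<mu> f"
  by (simp add: H1_def L2_iff)

lemma weak_pd_wpd: "weak_pd \<Omega> i f g \<Longrightarrow> weak_pd \<Omega> i f (wpd \<Omega> i f)"
  unfolding wpd_def by (rule someI[of "weak_pd \<Omega> i f"])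

lemma square_integrable_wpd:
  assumes "H1 \<Omega> f" shows "square_integrable \<mu> (wpd \<Omega> i f)"
proof -
  obtain g where "weak_pd \<Omega> i f g" using assms by (auto simp: H1_def)
  then have "weak_pd \<Omega> i f (wpd \<Omega> i f)" by (rule weak_pd_wpd)
  then show ?thesis by (simp add: weak_pd_def L2_iff)
qed

lemma H01_eigenfunction: "H01 \<Omega> (w j)"
  using eigenbasis by (simp add: dirichlet_eigenbasis_def)

lemma complete_orthonormal_eigenbasis: "complete_orthonormal_system \<mu> w"
  unfolding complete_orthonormal_system_def orthonormal_system_def
proof (intro conjI allI impI)
  show "square_integrable \<mu> (w j)" for j
    using H01_eigenfunction by (simp add: H01_def H1_square_integrable)
  show "(LINT x|\<mu>. w j x * w k x) = (if j = k then 1 else 0)" for j k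
    using eigenbasis by (simp add: dirichlet_eigenbasis_def integ_eq)
  show "mean_square_limit \<mu> (\<lambda>n x. \<Sum>j<n. fourier_coeff \<mu> w f j * w j x) f"
    if "square_integrable \<mu> f" for f
    using eigenbasis that by (simp add: dirichlet_eigenbasis_def mean_square_limit_def integ_eq L2_iff coef_eq)
qed

lemma square_integrable_wpd_eigenfunction: "square_integrable \<mu> (wpd \<Omega> i (w j))"
  using H01_eigenfunction[of j] by (simp add: H01_def square_integrable_wpd)

lemma square_integrable_eigenfunction: "square_integrable \<mu> (w j)"
  using complete_orthonormal_eigenbasis
  by (simp add: complete_orthonormal_system_def orthonormal_system_square_integrable)

text \<open>The square-integrability conjuncts are not redundant: a non-integrable integrand has Bochner
  integral \<open>0\<close>, so mean-square convergence alone would say nothing.\<close>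

definition H01_limit :: "'n fn \<Rightarrow> ('n \<Rightarrow> 'n fn) \<Rightarrow> bool" where
  "H01_limit f G \<longleftrightarrow> square_integrable \<mu> f \<and> (\<forall>i. square_integrable \<mu> (G i)) \<and>
     (\<exists>\<eta>. (\<forall>m. test_fun \<Omega> (\<eta> m)) \<and> mean_square_limit \<mu> \<eta> f \<and>
        (\<forall>i. mean_square_limit \<mu> (\<lambda>m. pd i (\<eta> m)) (G i)))"

lemma H01_limit_wpd:
  assumes "H01 \<Omega> f" shows "H01_limit f (\<lambda>i. wpd \<Omega> i f)"
proof -
  obtain \<eta> where "\<forall>m. test_fun \<Omega> (\<eta> m)" "mean_square_limit \<mu> \<eta> f"
    "\<forall>i. mean_square_limit \<mu> (\<lambda>m. pd i (\<eta> m)) (wpd \<Omega> i f)"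
    using assms unfolding H01_def integ_eq mean_square_limit_def by blast
  moreover have "square_integrable \<mu> f" "square_integrable \<mu> (wpd \<Omega> i f)" for i
    using assms by (simp_all add: H01_def H1_square_integrable square_integrable_wpd)
  ultimately show ?thesis unfolding H01_limit_def by blast
qed

lemma eigen_equation:
  assumes "H01_limit f G"
  shows "(\<Sum>i\<in>UNIV. LINT x|\<mu>. wpd \<Omega> i (w j) x * G i x) = lam j * (LINT x|\<mu>. w j x * f x)"
proof -
  obtain \<eta> where \<eta>: "\<And>m. test_fun \<Omega> (\<eta> m)" "mean_square_limit \<mu> \<eta> f"
    "\<And>i. mean_square_limit \<mu> (\<lambda>m. pd i (\<eta> m)) (G i)"
    using assms unfolding H01_limit_def by blast
  have sq: "square_integrable \<mu> f" "\<And>i. square_integrable \<mu> (G i)"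
    using assms by (auto simp: H01_limit_def)
  have lhs: "(\<lambda>m. \<Sum>i\<in>UNIV. LINT x|\<mu>. wpd \<Omega> i (w j) x * pd i (\<eta> m) x)
      \<longlonglongrightarrow> (\<Sum>i\<in>UNIV. LINT x|\<mu>. wpd \<Omega> i (w j) x * G i x)"
    by (intro tendsto_sum mean_square_limit_integral_mult_left[OF
          square_integrable_test_fun[OF test_fun_pd[OF \<eta>(1)]] sq(2) square_integrable_wpd_eigenfunction \<eta>(3)])
  have rhs: "(\<lambda>m. lam j * (LINT x|\<mu>. w j x * \<eta> m x)) \<longlonglongrightarrow> lam j * (LINT x|\<mu>. w j x * f x)"
    by (intro tendsto_mult_left mean_square_limit_integral_mult_left[OF
          square_integrable_test_fun[OF \<eta>(1)] sq(1) square_integrable_eigenfunction \<eta>(2)])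
  have "(\<Sum>i\<in>UNIV. LINT x|\<mu>. wpd \<Omega> i (w j) x * pd i (\<eta> m) x) = lam j * (LINT x|\<mu>. w j x * \<eta> m x)"
    for m using eigenbasis \<eta>(1) by (simp add: dirichlet_eigenbasis_def integ_eq)
  with lhs have "(\<lambda>m. lam j * (LINT x|\<mu>. w j x * \<eta> m x))
      \<longlonglongrightarrow> (\<Sum>i\<in>UNIV. LINT x|\<mu>. wpd \<Omega> i (w j) x * G i x)" by simp
  from LIMSEQ_unique[OF this rhs] show ?thesis .
qed

lemma gradient_eigenfunctions_orthogonal:
  "(\<Sum>i\<in>UNIV. LINT x|\<mu>. wpd \<Omega> i (w j) x * wpd \<Omega> i (w k) x) = lam j * (if j = k then 1 else 0)"
  using eigen_equation[OF H01_limit_wpd[OF H01_eigenfunction[of k]], of j] complete_orthonormal_eigenbasis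
  by (simp add: complete_orthonormal_system_def orthonormal_system_def)

lemma eigenvalue_nonneg: "0 \<le> lam j"
proof -
  have "0 \<le> (\<Sum>i\<in>UNIV. LINT x|\<mu>. wpd \<Omega> i (w j) x * wpd \<Omega> i (w j) x)"
    by (intro sum_nonneg integral_nonneg_AE AE_I2) simp
  then show ?thesis using gradient_eigenfunctions_orthogonal[of j j] by simp
qed

lemma Lam_H01_limit:
  assumes "H01_limit f G"
  shows square_integrable_Lam: "square_integrable \<mu> (Lam \<Omega> w lam f)"
    and fourier_coeff_Lam: "fourier_coeff \<mu> w (Lam \<Omega> w lam f) j = sqrt (lam j) * fourier_coeff \<mu> w f j"
proof -
  have G: "square_integrable \<mu> (G i)" for i using assms by (simp add: H01_limit_def)
  have proj: "(\<Sum>i\<in>UNIV. LINT x|\<mu>. wpd \<Omega> i (w j) x * G i x) = lam j * fourier_coeff \<mu> w f j" for j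
    unfolding eigen_equation[OF assms] fourier_coeff_def by (simp only: mult.commute)
  have bessel: "(\<Sum>j<n. lam j * (fourier_coeff \<mu> w f j)\<^sup>2) \<le> (\<Sum>i\<in>UNIV. LINT x|\<mu>. (G i x)\<^sup>2)" for n
    by (rule Bessel_inequality_orthogonal_fields[where E = "\<lambda>j i. wpd \<Omega> i (w j)"])
      (simp_all add: square_integrable_wpd_eigenfunction G gradient_eigenfunctions_orthogonal proj)
  have "summable (\<lambda>j. lam j * (fourier_coeff \<mu> w f j)\<^sup>2)"
  proof (rule summableI_nonneg_bounded)
    show "0 \<le> lam j * (fourier_coeff \<mu> w f j)\<^sup>2" for j using eigenvalue_nonneg[of j] by simp
  qed (rule bessel)
  moreover have "(sqrt (lam j) * fourier_coeff \<mu> w f j)\<^sup>2 = lam j * (fourier_coeff \<mu> w f j)\<^sup>2" for j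
    using eigenvalue_nonneg[of j] by (simp add: power_mult_distrib)
  ultimately have "summable (\<lambda>j. (sqrt (lam j) * fourier_coeff \<mu> w f j)\<^sup>2)" by simp
  moreover have "orthonormal_system \<mu> w"
    using complete_orthonormal_eigenbasis by (simp add: complete_orthonormal_system_def)
  ultimately obtain g where "square_integrable \<mu> g"
    "\<forall>j. fourier_coeff \<mu> w g j = sqrt (lam j) * fourier_coeff \<mu> w f j"
    using Riesz_Fischer[of \<mu> w "\<lambda>j. sqrt (lam j) * fourier_coeff \<mu> w f j"] by blast
  then have "L2 \<Omega> g \<and> (\<forall>j. coef \<Omega> w g j = sqrt (lam j) * coef \<Omega> w f j)"
    by (simp add: L2_iff coef_eq)
  then have "L2 \<Omega> (Lam \<Omega> w lam f) \<and> (\<forall>j. coef \<Omega> w (Lam \<Omega> w lam f) j = sqrt (lam j) * coef \<Omega> w f j)"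
    unfolding Lam_def by (rule someI[where P = "\<lambda>g. L2 \<Omega> g \<and> (\<forall>j. coef \<Omega> w g j = sqrt (lam j) * coef \<Omega> w f j)"])
  then show "square_integrable \<mu> (Lam \<Omega> w lam f)"
    and "fourier_coeff \<mu> w (Lam \<Omega> w lam f) j = sqrt (lam j) * fourier_coeff \<mu> w f j"
    by (simp_all add: L2_iff coef_eq)
qed

lemma Lam_pair_eq_integral:
  assumes "H01_limit f G" "square_integrable \<mu> g"
  shows "Lam_pair \<Omega> w lam g f = (LINT x|\<mu>. g x * Lam \<Omega> w lam f x)"
proof -
  have "(\<lambda>j. fourier_coeff \<mu> w g j * fourier_coeff \<mu> w (Lam \<Omega> w lam f) j) sums (LINT x|\<mu>. g x * Lam \<Omega> w lam f x)"
    using assms by (intro Parseval complete_orthonormal_eigenbasis square_integrable_Lam)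
  then show ?thesis
    unfolding Lam_pair_def coef_eq fourier_coeff_Lam[OF assms(1)] by (simp add: sums_iff mult_ac)
qed

lemma integral_mult_eq_0_if_orthogonal_test_funs:
  assumes h: "square_integrable \<mu> h" and orth: "\<And>\<eta>. test_fun \<Omega> \<eta> \<Longrightarrow> (LINT x|\<mu>. h x * \<eta> x) = 0"
    and b: "square_integrable \<mu> b"
  shows "(LINT x|\<mu>. h x * b x) = 0"
proof -
  have "fourier_coeff \<mu> w h j = 0" for j
  proof -
    obtain \<eta> where \<eta>: "\<And>m. test_fun \<Omega> (\<eta> m)" "mean_square_limit \<mu> \<eta> (w j)"
      using H01_limit_wpd[OF H01_eigenfunction[of j]] unfolding H01_limit_def by blast
    have "(\<lambda>m. LINT x|\<mu>. h x * \<eta> m x) \<longlonglongrightarrow> fourier_coeff \<mu> w h j"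
      unfolding fourier_coeff_def
      by (rule mean_square_limit_integral_mult_left[OF square_integrable_test_fun[OF \<eta>(1)]
            square_integrable_eigenfunction h \<eta>(2)])
    moreover have "(\<lambda>m. LINT x|\<mu>. h x * \<eta> m x) = (\<lambda>m. 0)" using orth \<eta>(1) by simp
    ultimately show ?thesis using LIMSEQ_unique tendsto_const by metis
  qed
  then show ?thesis
    using Parseval[OF complete_orthonormal_eigenbasis h b] by (simp add: sums_iff)
qed

lemma integral_wpd_mult:
  assumes fg: "weak_pd \<Omega> i f g" and b: "square_integrable \<mu> b"
  shows "(LINT x|\<mu>. wpd \<Omega> i f x * b x) = (LINT x|\<mu>. g x * b x)"
proof -
  have wpd: "weak_pd \<Omega> i f (wpd \<Omega> i f)" using fg by (rule weak_pd_wpd)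
  have sq: "square_integrable \<mu> (wpd \<Omega> i f)" "square_integrable \<mu> g"
    using wpd fg by (simp_all add: weak_pd_def L2_iff)
  have "(LINT x|\<mu>. (wpd \<Omega> i f x - g x) * b x) = 0"
  proof (rule integral_mult_eq_0_if_orthogonal_test_funs[OF square_integrable_diff[OF sq] _ b])
    fix \<eta> assume \<eta>: "test_fun \<Omega> \<eta>"
    have "(LINT x|\<mu>. wpd \<Omega> i f x * \<eta> x) = (LINT x|\<mu>. g x * \<eta> x)"
      using wpd fg \<eta> by (simp add: weak_pd_def integ_eq)
    then show "(LINT x|\<mu>. (wpd \<Omega> i f x - g x) * \<eta> x) = 0"
      using integrable_mult_square_integrable[OF sq(1) square_integrable_test_fun[OF \<eta>]]
        integrable_mult_square_integrable[OF sq(2) square_integrable_test_fun[OF \<eta>]]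
      by (simp add: left_diff_distrib)
  qed
  then show ?thesis
    using integrable_mult_square_integrable[OF sq(1) b] integrable_mult_square_integrable[OF sq(2) b]
    by (simp add: left_diff_distrib)
qed

lemma H01_limit_mult_test_fun:
  assumes fG: "H01_limit f G" and t: "test_fun \<Omega> t"
  shows "H01_limit (\<lambda>x. f x * t x) (\<lambda>i x. G i x * t x + f x * pd i t x)"
proof -
  obtain \<eta> where \<eta>: "\<And>m. test_fun \<Omega> (\<eta> m)" "mean_square_limit \<mu> \<eta> f"
    "\<And>i. mean_square_limit \<mu> (\<lambda>m. pd i (\<eta> m)) (G i)"
    using fG unfolding H01_limit_def by blast
  have f: "square_integrable \<mu> f" and G: "\<And>i. square_integrable \<mu> (G i)"
    using fG by (auto simp: H01_limit_def)
  have \<eta>_sq: "square_integrable \<mu> (\<eta> m)" "square_integrable \<mu> (pd i (\<eta> m))" for m i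
    by (simp_all add: square_integrable_test_fun[OF \<eta>(1)] square_integrable_test_fun[OF test_fun_pd[OF \<eta>(1)]])
  let ?\<eta>t = "\<lambda>m x. \<eta> m x * t x"
  have "test_fun \<Omega> (?\<eta>t m)" for m
    using test_fun_mult[OF \<eta>(1) test_fun_smooth[OF t]] .
  moreover have "mean_square_limit \<mu> (\<lambda>m x. \<eta> m x * t x) (\<lambda>x. f x * t x)"
    by (rule mean_square_limit_mult_test_fun[OF \<eta>_sq(1) f t \<eta>(2)])
  moreover have "mean_square_limit \<mu> (\<lambda>m. pd i (\<lambda>x. \<eta> m x * t x)) (\<lambda>x. G i x * t x + f x * pd i t x)" for i
  proof -
    have "pd i (\<lambda>x. \<eta> m x * t x) = (\<lambda>x. pd i (\<eta> m) x * t x + \<eta> m x * pd i t x)" for m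
      using pd_mult[OF test_fun_smooth[OF \<eta>(1)] test_fun_smooth[OF t]] by (simp add: fun_eq_iff)
    moreover have "mean_square_limit \<mu> (\<lambda>m x. pd i (\<eta> m) x * t x + \<eta> m x * pd i t x)
        (\<lambda>x. G i x * t x + f x * pd i t x)"
      using \<eta>_sq f G t test_fun_pd[OF t] \<eta>
      by (intro mean_square_limit_add mean_square_limit_mult_test_fun square_integrable_mult_test_fun)
    ultimately show ?thesis by simp
  qed
  moreover have "square_integrable \<mu> (\<lambda>x. f x * t x)"
    "square_integrable \<mu> (\<lambda>x. G i x * t x + f x * pd i t x)" for i
    using f G t test_fun_pd[OF t]
    by (simp_all add: square_integrable_add square_integrable_mult_test_fun)
  ultimately show ?thesis unfolding H01_limit_def by (intro conjI exI[of _ ?\<eta>t]) blast+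
qed

lemma weak_pd_mult_test_fun:
  assumes fg: "weak_pd \<Omega> i f g" and t: "test_fun \<Omega> t"
  shows "weak_pd \<Omega> i (\<lambda>x. f x * t x) (\<lambda>x. g x * t x + f x * pd i t x)"
proof -
  have f: "square_integrable \<mu> f" and g: "square_integrable \<mu> g"
    using fg by (simp_all add: weak_pd_def L2_iff)
  have "(LINT x|\<mu>. f x * t x * pd i \<phi> x) = - (LINT x|\<mu>. (g x * t x + f x * pd i t x) * \<phi> x)"
    if \<phi>: "test_fun \<Omega> \<phi>" for \<phi>
  proof -
    have t\<phi>: "test_fun \<Omega> (\<lambda>x. \<phi> x * t x)"
      using test_fun_mult[OF \<phi> test_fun_smooth[OF t]] .
    have t'\<phi>: "test_fun \<Omega> (\<lambda>x. \<phi> x * pd i t x)"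
      using test_fun_mult[OF \<phi> test_fun_smooth[OF test_fun_pd[OF t]]] .
    have int1: "integrable \<mu> (\<lambda>x. f x * t x * pd i \<phi> x)"
      using integrable_mult_square_integrable[OF square_integrable_mult_test_fun[OF f t]
          square_integrable_test_fun[OF test_fun_pd[OF \<phi>]]] .
    have int2: "integrable \<mu> (\<lambda>x. f x * (\<phi> x * pd i t x))"
      using integrable_mult_square_integrable[OF f square_integrable_test_fun[OF t'\<phi>]] .
    have int3: "integrable \<mu> (\<lambda>x. g x * (\<phi> x * t x))"
      using integrable_mult_square_integrable[OF g square_integrable_test_fun[OF t\<phi>]] .
    have "pd i (\<lambda>x. \<phi> x * t x) x = pd i \<phi> x * t x + \<phi> x * pd i t x" for x
      using \<phi> t by (simp add: pd_mult test_fun_smooth)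
    then have "(LINT x|\<mu>. f x * pd i (\<lambda>x. \<phi> x * t x) x)
        = (LINT x|\<mu>. f x * t x * pd i \<phi> x + f x * (\<phi> x * pd i t x))"
      by (simp add: algebra_simps)
    also have "\<dots> = (LINT x|\<mu>. f x * t x * pd i \<phi> x) + (LINT x|\<mu>. f x * (\<phi> x * pd i t x))"
      using int1 int2 by (rule Bochner_Integration.integral_add)
    finally have "(LINT x|\<mu>. f x * t x * pd i \<phi> x)
        = (LINT x|\<mu>. f x * pd i (\<lambda>x. \<phi> x * t x) x) - (LINT x|\<mu>. f x * (\<phi> x * pd i t x))"
      by simp
    also have "(LINT x|\<mu>. f x * pd i (\<lambda>x. \<phi> x * t x) x) = - (LINT x|\<mu>. g x * (\<phi> x * t x))"
      using fg t\<phi> by (simp add: weak_pd_def integ_eq)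
    also have "- (LINT x|\<mu>. g x * (\<phi> x * t x)) - (LINT x|\<mu>. f x * (\<phi> x * pd i t x))
        = - ((LINT x|\<mu>. g x * (\<phi> x * t x)) + (LINT x|\<mu>. f x * (\<phi> x * pd i t x)))"
      by simp
    also have "(LINT x|\<mu>. g x * (\<phi> x * t x)) + (LINT x|\<mu>. f x * (\<phi> x * pd i t x))
        = (LINT x|\<mu>. g x * (\<phi> x * t x) + f x * (\<phi> x * pd i t x))"
      using int3 int2 by (rule Bochner_Integration.integral_add[symmetric])
    also have "\<dots> = (LINT x|\<mu>. (g x * t x + f x * pd i t x) * \<phi> x)"
      by (simp add: algebra_simps)
    finally show ?thesis .
  qed
  moreover have "square_integrable \<mu> (\<lambda>x. f x * t x)" "square_integrable \<mu> (\<lambda>x. g x * t x + f x * pd i t x)"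
    using f g t test_fun_pd[OF t] by (simp_all add: square_integrable_add square_integrable_mult_test_fun)
  ultimately show ?thesis by (simp add: weak_pd_def L2_iff integ_eq)
qed

lemma weak_pd_wpd_H01: "H01 \<Omega> \<psi> \<Longrightarrow> weak_pd \<Omega> i \<psi> (wpd \<Omega> i \<psi>)"
  by (auto simp: H01_def H1_def intro: weak_pd_wpd)

lemma square_integrable_gperp:
  assumes "H1 \<Omega> \<psi>" shows "square_integrable \<mu> (gperp \<Omega> i1 i2 \<psi> k)"
proof -
  have "gperp \<Omega> i1 i2 \<psi> k = (if k = i1 then (\<lambda>x. - wpd \<Omega> i2 \<psi> x)
      else if k = i2 then wpd \<Omega> i1 \<psi> else (\<lambda>x. 0))"
    by (auto simp: gperp_def fun_eq_iff)
  then show ?thesis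
    using square_integrable_wpd[OF assms] by (simp add: square_integrable_uminus square_integrable_zero)
qed

text \<open>The pairing of \<open>h\<close> with the curl of \<open>\<psi> \<nabla>\<phi>\<close>: the terms with second derivatives of \<open>\<phi>\<close>
  cancel by the symmetry of mixed partials, leaving \<open>\<nabla>\<^sup>\<bottom>\<psi> \<cdot> \<nabla>\<phi>\<close>.\<close>

lemma sum_perp_pair_mult_grad:
  assumes \<psi>: "H01 \<Omega> \<psi>" and \<phi>: "test_fun \<Omega> \<phi>" and i12: "i1 \<noteq> i2" and h: "square_integrable \<mu> h"
  shows "(\<Sum>k\<in>UNIV. perp_pair \<Omega> i1 i2 h k (\<lambda>x. pd k \<phi> x * \<psi> x))
       = - (LINT x|\<mu>. h x * (\<Sum>k\<in>UNIV. gperp \<Omega> i1 i2 \<psi> k x * pd k \<phi> x))"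
proof -
  define X where "X = pd i2 (pd i1 \<phi>)"
  have X: "pd i1 (pd i2 \<phi>) = X" unfolding X_def by (rule ext) (simp add: pd_commute test_fun_smooth[OF \<phi>])
  have \<psi>_sq: "square_integrable \<mu> \<psi>" using \<psi> by (simp add: H01_def H1_square_integrable)
  have wpd_sq: "square_integrable \<mu> (wpd \<Omega> i \<psi>)" for i using \<psi> by (simp add: H01_def square_integrable_wpd)
  have int: "integrable \<mu> (\<lambda>x. wpd \<Omega> i \<psi> x * pd k \<phi> x * h x)" "integrable \<mu> (\<lambda>x. \<psi> x * X x * h x)" for i k
    using integrable_mult_square_integrable[OF square_integrable_mult_test_fun[OF wpd_sq test_fun_pd[OF \<phi>]] h]
      integrable_mult_square_integrable[OF square_integrable_mult_test_fun[OF \<psi>_sq] h]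
      test_fun_pd[OF test_fun_pd[OF \<phi>]] by (auto simp: X_def)
  have pair: "(LINT x|\<mu>. h x * wpd \<Omega> i (\<lambda>x. pd k \<phi> x * \<psi> x) x)
      = (LINT x|\<mu>. (wpd \<Omega> i \<psi> x * pd k \<phi> x + \<psi> x * pd i (pd k \<phi>) x) * h x)" for i k
  proof -
    have "(\<lambda>x. pd k \<phi> x * \<psi> x) = (\<lambda>x. \<psi> x * pd k \<phi> x)" by (simp add: mult.commute)
    then show ?thesis
      using integral_wpd_mult[OF weak_pd_mult_test_fun[OF weak_pd_wpd_H01[OF \<psi>] test_fun_pd[OF \<phi>]] h]
      by (simp add: mult.commute[of "h _"])
  qed
  have "(\<Sum>k\<in>UNIV. perp_pair \<Omega> i1 i2 h k (\<lambda>x. pd k \<phi> x * \<psi> x))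
      = perp_pair \<Omega> i1 i2 h i1 (\<lambda>x. pd i1 \<phi> x * \<psi> x) + perp_pair \<Omega> i1 i2 h i2 (\<lambda>x. pd i2 \<phi> x * \<psi> x)"
    using i12 by (intro sum_UNIV_two) (simp_all add: perp_pair_def gperp_def integ_eq)
  also have "\<dots> = (LINT x|\<mu>. (wpd \<Omega> i2 \<psi> x * pd i1 \<phi> x + \<psi> x * X x) * h x)
      - (LINT x|\<mu>. (wpd \<Omega> i1 \<psi> x * pd i2 \<phi> x + \<psi> x * X x) * h x)"
    using i12 pair[of i2 i1] pair[of i1 i2] by (simp add: perp_pair_def gperp_def integ_eq X X_def)
  also have "\<dots> = (LINT x|\<mu>. (wpd \<Omega> i2 \<psi> x * pd i1 \<phi> x - wpd \<Omega> i1 \<psi> x * pd i2 \<phi> x) * h x)"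
    using int by (simp add: algebra_simps)
  also have "\<dots> = - (LINT x|\<mu>. h x * (\<Sum>k\<in>UNIV. gperp \<Omega> i1 i2 \<psi> k x * pd k \<phi> x))"
  proof -
    have curl: "(\<Sum>k\<in>UNIV. gperp \<Omega> i1 i2 \<psi> k x * pd k \<phi> x)
        = - wpd \<Omega> i2 \<psi> x * pd i1 \<phi> x + wpd \<Omega> i1 \<psi> x * pd i2 \<phi> x" for x
      using i12 by (subst sum_UNIV_two[of i1 i2]) (simp_all add: gperp_def)
    show ?thesis unfolding curl by (subst integral_minus[symmetric]) (simp add: algebra_simps)
  qed
  finally show ?thesis .
qed

text \<open>The symmetry of \<open>\<Lambda>\<close>: the duality pairing \<open>\<langle>\<Lambda>u\<^sub>k, \<psi> \<partial>\<^sub>k\<phi>\<rangle>\<close> is \<open>\<integral> u\<^sub>k \<Lambda>(\<psi> \<partial>\<^sub>k\<phi>)\<close>.\<close>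

lemma sum_Lam_pair_mult_grad:
  assumes \<psi>: "H01 \<Omega> \<psi>" and \<phi>: "test_fun \<Omega> \<phi>" and u: "\<And>k. square_integrable \<mu> (u k)"
  shows "(\<Sum>k\<in>UNIV. Lam_pair \<Omega> w lam (u k) (\<lambda>x. pd k \<phi> x * \<psi> x))
    = (\<Sum>k\<in>UNIV. integ \<Omega> (\<lambda>x. u k x *
         (Lam \<Omega> w lam (\<lambda>y. \<psi> y * pd k \<phi> y) x - pd k \<phi> x * Lam \<Omega> w lam \<psi> x)))
      + integ \<Omega> (\<lambda>x. Lam \<Omega> w lam \<psi> x * (\<Sum>k\<in>UNIV. u k x * pd k \<phi> x))"
proof -
  let ?f = "\<lambda>k x. \<psi> x * pd k \<phi> x" and ?\<theta> = "Lam \<Omega> w lam \<psi>"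
  have f_eq: "(\<lambda>x. pd k \<phi> x * \<psi> x) = ?f k" for k by (simp add: mult.commute)
  have \<psi>_lim: "H01_limit \<psi> (\<lambda>i. wpd \<Omega> i \<psi>)" using \<psi> by (rule H01_limit_wpd)
  have f: "H01_limit (?f k) (\<lambda>i x. wpd \<Omega> i \<psi> x * pd k \<phi> x + \<psi> x * pd i (pd k \<phi>) x)" for k
    by (rule H01_limit_mult_test_fun[OF \<psi>_lim test_fun_pd[OF \<phi>]])
  have uD: "square_integrable \<mu> (\<lambda>x. u k x * pd k \<phi> x)" for k
    by (rule square_integrable_mult_test_fun[OF u test_fun_pd[OF \<phi>]])
  have \<theta>uD: "integrable \<mu> (\<lambda>x. ?\<theta> x * (u k x * pd k \<phi> x))" for k
    by (rule integrable_mult_square_integrable[OF square_integrable_Lam[OF \<psi>_lim] uD])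
  have "Lam_pair \<Omega> w lam (u k) (\<lambda>x. pd k \<phi> x * \<psi> x)
      = integ \<Omega> (\<lambda>x. u k x * (Lam \<Omega> w lam (?f k) x - pd k \<phi> x * ?\<theta> x))
        + integ \<Omega> (\<lambda>x. ?\<theta> x * (u k x * pd k \<phi> x))" for k
    unfolding f_eq Lam_pair_eq_integral[OF f u] integ_eq
    using integrable_mult_square_integrable[OF u square_integrable_Lam[OF f]] \<theta>uD
    by (simp add: algebra_simps)
  moreover have "(\<Sum>k\<in>UNIV. integ \<Omega> (\<lambda>x. ?\<theta> x * (u k x * pd k \<phi> x)))
      = integ \<Omega> (\<lambda>x. ?\<theta> x * (\<Sum>k\<in>UNIV. u k x * pd k \<phi> x))"
    unfolding integ_eq sum_distrib_left using \<theta>uD by (rule Bochner_Integration.integral_sum[symmetric])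
  ultimately show ?thesis by (simp add: sum.distrib)
qed

end

theorem lemma3p2:
  fixes \<Omega> :: "(real^'n::finite) set"
    and w :: "nat \<Rightarrow> real^'n \<Rightarrow> real" and lam :: "nat \<Rightarrow> real"
    and i1 i2 :: 'n
    and \<psi> \<phi> \<theta> :: "real^'n \<Rightarrow> real" and u :: "'n \<Rightarrow> real^'n \<Rightarrow> real"
  assumes "CARD('n) \<ge> 2" and "i1 \<noteq> i2"
    and "smooth_bounded_domain \<Omega>"
    and "dirichlet_eigenbasis \<Omega> w lam"
    and "H01 \<Omega> \<psi>"
    and "u = gperp \<Omega> i1 i2 \<psi>"
    and "\<theta> = Lam \<Omega> w lam \<psi>"
    and "test_fun \<Omega> \<phi>"
  shows "integ \<Omega> (\<lambda>x. \<theta> x * (\<Sum>k\<in>UNIV. u k x * pd k \<phi> x))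
   = 1/2 * (\<Sum>k\<in>UNIV.
              Lam_pair \<Omega> w lam (u k) (\<lambda>x. pd k \<phi> x * \<psi> x)
            - perp_pair \<Omega> i1 i2 (Lam \<Omega> w lam \<psi>) k (\<lambda>x. pd k \<phi> x * \<psi> x))
   - 1/2 * (\<Sum>k\<in>UNIV. integ \<Omega> (\<lambda>x. u k x *
              (Lam \<Omega> w lam (\<lambda>y. \<psi> y * pd k \<phi> y) x - pd k \<phi> x * Lam \<Omega> w lam \<psi> x)))"
proof -
  \<comment> \<open>\<open>CARD('n) \<ge> 2\<close> is implied by \<open>i1 \<noteq> i2\<close> and not used.\<close>
  interpret dirichlet_eigensystem \<Omega> w lam
    using assms(3,4) by unfold_locales (auto simp: smooth_bounded_domain_def)
  have \<theta>: "square_integrable \<mu> \<theta>"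
    using square_integrable_Lam[OF H01_limit_wpd[OF assms(5)]] assms(7) by simp
  have u: "square_integrable \<mu> (u k)" for k
    using assms(5,6) by (simp add: H01_def square_integrable_gperp)
  have perp: "(\<Sum>k\<in>UNIV. perp_pair \<Omega> i1 i2 \<theta> k (\<lambda>x. pd k \<phi> x * \<psi> x))
      = - integ \<Omega> (\<lambda>x. \<theta> x * (\<Sum>k\<in>UNIV. u k x * pd k \<phi> x))"
    using sum_perp_pair_mult_grad[OF assms(5,8,2) \<theta>] assms(6) by (simp add: integ_eq)
  show ?thesis
    unfolding sum_subtractf perp sum_Lam_pair_mult_grad[OF assms(5,8) u] assms(7)[symmetric]
    by (simp add: field_simps)
qed

end
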